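(* Let $k,d$ be positive integers with $k\le d$ and let $v\in\mathbb{C}^d$ be a unit vector. Then $$T_k(v)=\max\Big\{\langle m,v^\downarrow\rangle^2-\|m\|_{(k)}^2 \;:\; m\in\mathbb{R}^d,\ \|m\|_2=1\Big\}.$$
   Context: $v^\downarrow\in\mathbb{R}^d$ is the vector whose $i$-th entry $|v^\downarrow_i|$ is the $i$-th largest of $|v_1|,\dots,|v_d|$ (nonincreasing order). For $m\in\mathbb{R}^d$, the top-$k$ norm is $\|m\|_{(k)}=\big(\sum_{i=1}^k |m^\downarrow_i|^2\big)^{1/2}$. A vector is $k$-sparse if it has at most $k$ nonzero coordinates; $\mathcal{I}_k$ is the set of density matrices on $\mathbb{C}^d$ that are convex combinations of $uu^\dagger$ for $k$-sparse unit vectors $u$; $T_k(v)=\min_{\sigma\in\mathcal{I}_k}\tfrac12\|vv^\dagger-\sigma\|_1$. *)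

theory Defs
  imports "Jordan_Normal_Form.Schur_Decomposition"
begin

(* Trace norm ||A||_1 = tr sqrt(A^H A) = sum of the singular values of A,
   i.e. the sum of the square roots of the eigenvalues (with algebraic
   multiplicity) of the positive semidefinite matrix A^H A. *)
definition trace_norm :: "complex mat \<Rightarrow> real" where
  "trace_norm A = (SOME s. \<exists>as. char_poly (mat_adjoint A * A) = (\<Prod>a\<leftarrow>as. [:- a, 1:])
                              \<and> s = (\<Sum>a\<leftarrow>as. sqrt (cmod a)))"

definition outer :: "complex vec \<Rightarrow> complex mat" where
  "outer u = mat (dim_vec u) (dim_vec u) (\<lambda>(a,b). u $ a * cnj (u $ b))"

definition sparse :: "nat \<Rightarrow> complex vec \<Rightarrow> bool" where
  "sparse k u \<longleftrightarrow> card {i. i < dim_vec u \<and> u $ i \<noteq> 0} \<le> k"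

definition unit_cvec :: "complex vec \<Rightarrow> bool" where
  "unit_cvec u \<longleftrightarrow> (\<Sum>i<dim_vec u. (cmod (u $ i))\<^sup>2) = 1"

definition Ik :: "nat \<Rightarrow> nat \<Rightarrow> complex mat set" where
  "Ik d k = {\<sigma>. \<exists>n (p :: nat \<Rightarrow> real) (us :: nat \<Rightarrow> complex vec).
       (\<forall>i<n. p i \<ge> 0) \<and> (\<Sum>i<n. p i) = 1 \<and>
       (\<forall>i<n. us i \<in> carrier_vec d \<and> unit_cvec (us i) \<and> sparse k (us i)) \<and>
       \<sigma> = mat d d (\<lambda>(a,b). \<Sum>i<n. complex_of_real (p i) * (us i $ a * cnj (us i $ b)))}"

definition Tk :: "nat \<Rightarrow> complex vec \<Rightarrow> real" where
  "Tk k v = Inf ((\<lambda>\<sigma>. trace_norm (outer v - \<sigma>) / 2) ` Ik (dim_vec v) k)"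

definition vdown :: "complex vec \<Rightarrow> real list" where
  "vdown v = rev (sort (map cmod (list_of_vec v)))"

definition topk_norm :: "nat \<Rightarrow> real vec \<Rightarrow> real" where
  "topk_norm k m = sqrt (\<Sum>i<k. (rev (sort (map abs (list_of_vec m))) ! i)\<^sup>2)"

definition rinner_list :: "real vec \<Rightarrow> real list \<Rightarrow> real" where
  "rinner_list m w = (\<Sum>i<dim_vec m. m $ i * w ! i)"

end

theory Submission
  imports Defs "HOL-Combinatorics.List_Permutation"
begin

text \<open>For a state \<open>\<sigma>\<close>, the matrix \<open>v v\<^sup>\<dagger> - \<sigma>\<close> is traceless and negative
  semidefinite on \<open>v\<^sup>\<bottom>\<close>, hence has at most one positive eigenvalue, and half its trace norm
  is its largest eigenvalue \<open>max\<^sub>x \<langle>x, (v v\<^sup>\<dagger> - \<sigma>) x\<rangle>\<close> over unit vectors \<open>x\<close>. For a mixture \<open>\<sigma>\<close> of \<open>k\<close>-sparse pure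
  states, Cauchy--Schwarz on the supports gives \<open>\<langle>x, \<sigma> x\<rangle> \<le> \<parallel>x\<parallel>\<^sub>(\<^sub>k\<^sub>)\<^sup>2\<close>; taking for \<open>x\<close> a real
  unit vector \<open>m\<close>, permuted into the order of \<open>|v|\<close> and given the phases of \<open>v\<close>, yields
  \<open>\<langle>m, v\<^sup>\<down>\<rangle>\<^sup>2 - \<parallel>m\<parallel>\<^sub>(\<^sub>k\<^sub>)\<^sup>2 \<le> T\<^sub>k(v)\<close>.

  Let \<open>M\<close> be the maximum of the right-hand side, which exists by compactness. If
  \<open>T\<^sub>k(v) > M\<close>, the convex set of sparse mixtures keeps a positive Frobenius distance from the
  convex set of matrices \<open>\<tau>\<close> with \<open>\<lambda>\<^sub>m\<^sub>a\<^sub>x(v v\<^sup>\<dagger> - \<tau>) \<le> M\<close>. A separating matrix yields a positive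
  semidefinite \<open>H\<close> with \<open>\<langle>v, H v\<rangle> - \<langle>u, H u\<rangle> - M tr H > 0\<close> for every \<open>k\<close>-sparse unit vector
  \<open>u\<close>, and then the normalised vector \<open>H v\<close> gives the objective a value above \<open>M\<close>.\<close>

text \<open>A vector of \<open>\<complex>\<^sup>d\<close> is a function \<open>nat \<Rightarrow> complex\<close> and a \<open>d \<times> d\<close> matrix a function
  \<open>nat \<Rightarrow> nat \<Rightarrow> complex\<close>; only the values at indices below \<open>d\<close> matter.\<close>

definition cinner :: "nat \<Rightarrow> (nat \<Rightarrow> complex) \<Rightarrow> (nat \<Rightarrow> complex) \<Rightarrow> complex" where
  "cinner d x y = (\<Sum>a<d. cnj (x a) * y a)"

definition sqnorm :: "nat \<Rightarrow> (nat \<Rightarrow> complex) \<Rightarrow> real" where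
  "sqnorm d x = (\<Sum>a<d. (cmod (x a))^2)"

definition matvec :: "nat \<Rightarrow> (nat \<Rightarrow> nat \<Rightarrow> complex) \<Rightarrow> (nat \<Rightarrow> complex) \<Rightarrow> nat \<Rightarrow> complex" where
  "matvec d A x a = (\<Sum>b<d. A a b * x b)"

definition qform :: "nat \<Rightarrow> (nat \<Rightarrow> nat \<Rightarrow> complex) \<Rightarrow> (nat \<Rightarrow> complex) \<Rightarrow> complex" where
  "qform d A x = cinner d x (matvec d A x)"

definition hermitian :: "nat \<Rightarrow> (nat \<Rightarrow> nat \<Rightarrow> complex) \<Rightarrow> bool" where
  "hermitian d A \<longleftrightarrow> (\<forall>a<d. \<forall>b<d. A b a = cnj (A a b))"

definition orthonormal :: "nat \<Rightarrow> nat \<Rightarrow> (nat \<Rightarrow> nat \<Rightarrow> complex) \<Rightarrow> bool" where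
  "orthonormal d n e \<longleftrightarrow> (\<forall>i<n. \<forall>j<n. cinner d (e i) (e j) = (if i = j then 1 else 0))"

lemma cnj_mult_self: "cnj z * z = complex_of_real ((cmod z)^2)"
  by (metis complex_norm_square mult.commute)

lemma mult_cnj_self: "z * cnj z = complex_of_real ((cmod z)^2)"
  by (metis complex_norm_square)

lemma cinner_self: "cinner d x x = complex_of_real (sqnorm d x)"
  unfolding cinner_def sqnorm_def by (simp add: cnj_mult_self)

lemma cinner_commute: "cinner d y x = cnj (cinner d x y)"
  unfolding cinner_def by (simp add: mult.commute)

lemma cinner_add_right: "cinner d x (\<lambda>a. y a + z a) = cinner d x y + cinner d x z"
  unfolding cinner_def by (simp add: distrib_left sum.distrib)

lemma cinner_diff_right: "cinner d x (\<lambda>a. y a - z a) = cinner d x y - cinner d x z"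
  unfolding cinner_def by (simp add: right_diff_distrib sum_subtractf)

lemma cinner_scale_right: "cinner d x (\<lambda>a. c * y a) = c * cinner d x y"
  unfolding cinner_def by (simp add: sum_distrib_left algebra_simps)

lemma cinner_add_left: "cinner d (\<lambda>a. y a + z a) x = cinner d y x + cinner d z x"
  unfolding cinner_def by (simp add: distrib_right sum.distrib)

lemma cinner_scale_left: "cinner d (\<lambda>a. c * y a) x = cnj c * cinner d y x"
  unfolding cinner_def by (simp add: sum_distrib_left algebra_simps)

lemma cinner_sum_right: "cinner d x (\<lambda>b. \<Sum>j\<in>J. f j b) = (\<Sum>j\<in>J. cinner d x (f j))"
  unfolding cinner_def by (simp add: sum_distrib_left sum.swap[of _ J])

lemma cinner_unit_right: "a < d \<Longrightarrow> cinner d x (\<lambda>b. if b = a then 1 else 0) = cnj (x a)"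
  unfolding cinner_def by (simp add: if_distrib sum.delta cong: if_cong)

lemma cinner_cong:
  "(\<And>a. a < d \<Longrightarrow> x a = x' a) \<Longrightarrow> (\<And>a. a < d \<Longrightarrow> y a = y' a) \<Longrightarrow> cinner d x y = cinner d x' y'"
  unfolding cinner_def by (rule sum.cong) auto

lemma cinner_expand_pencil:
  "cinner d (\<lambda>a. x a + of_real t * y a) (\<lambda>a. u a + of_real t * w a)
   = cinner d x u + of_real t * cinner d x w + of_real t * cinner d y u + of_real (t^2) * cinner d y w"
  unfolding cinner_def by (simp add: sum.distrib sum_distrib_left algebra_simps power2_eq_square)

lemma sqnorm_nonneg: "sqnorm d x \<ge> 0"
  unfolding sqnorm_def by (simp add: sum_nonneg)

lemma sqnorm_eq_0_iff: "sqnorm d x = 0 \<longleftrightarrow> (\<forall>a<d. x a = 0)"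
  unfolding sqnorm_def by (auto simp: sum_nonneg_eq_0_iff)

lemma sqnorm_scale: "sqnorm d (\<lambda>a. c * x a) = (cmod c)^2 * sqnorm d x"
  unfolding sqnorm_def by (simp add: sum_distrib_left norm_mult power_mult_distrib)

lemma sqnorm_normalize:
  assumes "sqnorm d x > 0"
  shows "sqnorm d (\<lambda>a. complex_of_real (1 / sqrt (sqnorm d x)) * x a) = 1"
  unfolding sqnorm_scale norm_of_real using assms by (simp add: power_divide)

lemma norm_le_one_of_sqnorm:
  assumes "a < d" "sqnorm d x = 1"
  shows "cmod (x a) \<le> 1"
proof -
  have "(cmod (x a))^2 \<le> sqnorm d x"
    unfolding sqnorm_def using assms(1) by (intro member_le_sum) auto
  thus ?thesis using assms(2) by (simp add: power_le_one_iff)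
qed

lemma cauchy_schwarz_real:
  fixes f g :: "'a \<Rightarrow> real"
  shows "(\<Sum>i\<in>A. f i * g i)^2 \<le> (\<Sum>i\<in>A. (f i)^2) * (\<Sum>i\<in>A. (g i)^2)"
proof -
  have "0 \<le> (\<Sum>i\<in>A. \<Sum>j\<in>A. (f i * g j - f j * g i)^2)" by (simp add: sum_nonneg)
  also have "\<dots> = (\<Sum>i\<in>A. \<Sum>j\<in>A. (f i)^2 * (g j)^2 + (g i)^2 * (f j)^2 - 2 * ((f i * g i) * (f j * g j)))"
    by (intro sum.cong refl) (simp add: power2_eq_square algebra_simps)
  also have "\<dots> = (\<Sum>i\<in>A. \<Sum>j\<in>A. (f i)^2 * (g j)^2) + (\<Sum>i\<in>A. \<Sum>j\<in>A. (g i)^2 * (f j)^2)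
       - 2 * (\<Sum>i\<in>A. \<Sum>j\<in>A. (f i * g i) * (f j * g j))"
    by (simp add: sum.distrib sum_subtractf sum_distrib_left)
  also have "\<dots> = 2 * ((\<Sum>i\<in>A. (f i)^2) * (\<Sum>i\<in>A. (g i)^2)) - 2 * (\<Sum>i\<in>A. f i * g i)^2"
    by (simp add: sum_product[symmetric] power2_eq_square)
  finally show ?thesis by simp
qed

lemma cauchy_schwarz_complex:
  fixes x u :: "nat \<Rightarrow> complex"
  shows "(cmod (\<Sum>a\<in>S. cnj (x a) * u a))^2 \<le> (\<Sum>a\<in>S. (cmod (x a))^2) * (\<Sum>a\<in>S. (cmod (u a))^2)"
proof -
  have "cmod (\<Sum>a\<in>S. cnj (x a) * u a) \<le> (\<Sum>a\<in>S. cmod (x a) * cmod (u a))"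
    by (rule order_trans[OF norm_sum]) (simp add: norm_mult)
  hence "(cmod (\<Sum>a\<in>S. cnj (x a) * u a))^2 \<le> (\<Sum>a\<in>S. cmod (x a) * cmod (u a))^2"
    by (intro power_mono) auto
  also have "\<dots> \<le> (\<Sum>a\<in>S. (cmod (x a))^2) * (\<Sum>a\<in>S. (cmod (u a))^2)" by (rule cauchy_schwarz_real)
  finally show ?thesis .
qed

lemma cinner_cauchy_schwarz: "(cmod (cinner d x y))^2 \<le> sqnorm d x * sqnorm d y"
  unfolding cinner_def sqnorm_def by (rule cauchy_schwarz_complex)

lemma matvec_lincomb: "matvec d A (\<lambda>b. c1 * x b + c2 * y b) a = c1 * matvec d A x a + c2 * matvec d A y a"
  unfolding matvec_def by (simp add: sum.distrib sum_distrib_left algebra_simps)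

lemma qform_expand: "qform d A x = (\<Sum>a<d. \<Sum>b<d. cnj (x a) * A a b * x b)"
  unfolding qform_def cinner_def matvec_def by (simp add: sum_distrib_left mult.assoc)

lemma qform_mat_cong: "(\<And>a b. a < d \<Longrightarrow> b < d \<Longrightarrow> A a b = B a b) \<Longrightarrow> qform d A x = qform d B x"
  unfolding qform_expand by (intro sum.cong refl) auto

lemma qform_scale: "qform d A (\<lambda>a. c * x a) = cnj c * c * qform d A x"
  unfolding qform_expand by (simp add: sum_distrib_left algebra_simps)

lemma qform_zero: "(\<And>a. a < d \<Longrightarrow> x a = 0) \<Longrightarrow> qform d A x = 0"
  unfolding qform_expand by simp

lemma qform_lincomb: "qform d (\<lambda>a b. c1 * A a b + c2 * B a b) x = c1 * qform d A x + c2 * qform d B x"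
  unfolding qform_expand by (simp add: sum.distrib sum_distrib_left algebra_simps)

lemma qform_diff: "qform d (\<lambda>a b. A a b - B a b) x = qform d A x - qform d B x"
  unfolding qform_expand by (simp add: algebra_simps sum_subtractf)

lemma qform_sum: "qform d (\<lambda>a b. \<Sum>i<n. c i * M i a b) x = (\<Sum>i<n. c i * qform d (M i) x)"
  unfolding qform_expand by (simp add: sum_distrib_left sum.swap[of _ "{..<n}"] algebra_simps)

lemma qform_rank1: "qform d (\<lambda>a b. u a * cnj (u b)) x = complex_of_real ((cmod (cinner d x u))^2)"
proof -
  have "qform d (\<lambda>a b. u a * cnj (u b)) x = cinner d x u * cnj (cinner d x u)"
    unfolding qform_expand cinner_def by (simp add: sum_product mult.commute mult.left_commute)
  thus ?thesis by (simp only: mult_cnj_self)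
qed

lemma qform_scalar: "qform d (\<lambda>a b. if a = b then c else 0) x = c * complex_of_real (sqnorm d x)"
proof -
  have "qform d (\<lambda>a b. if a = b then c else 0) x = (\<Sum>a<d. c * (cnj (x a) * x a))"
    unfolding qform_expand
  proof (intro sum.cong refl)
    fix a assume a: "a \<in> {..<d}"
    have "(\<Sum>b<d. cnj (x a) * (if a = b then c else 0) * x b) = (\<Sum>b<d. if b = a then c * (cnj (x a) * x a) else 0)"
      by (intro sum.cong refl) auto
    thus "(\<Sum>b<d. cnj (x a) * (if a = b then c else 0) * x b) = c * (cnj (x a) * x a)" using a by simp
  qed
  also have "\<dots> = c * cinner d x x" unfolding cinner_def by (simp add: sum_distrib_left)
  finally show ?thesis by (simp add: cinner_self)
qed

lemma qform_bound:
  assumes "sqnorm d x = 1"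
  shows "cmod (qform d A x) \<le> (\<Sum>a<d. \<Sum>b<d. cmod (A a b))"
proof -
  have "cmod (qform d A x) \<le> (\<Sum>a<d. \<Sum>b<d. cmod (cnj (x a) * A a b * x b))"
    unfolding qform_expand by (rule order_trans[OF norm_sum sum_mono[OF norm_sum]])
  also have "\<dots> \<le> (\<Sum>a<d. \<Sum>b<d. cmod (A a b))"
  proof (intro sum_mono)
    fix a b assume "a \<in> {..<d}" "b \<in> {..<d}"
    hence "cmod (x a) \<le> 1" "cmod (x b) \<le> 1" using norm_le_one_of_sqnorm assms by auto
    hence "cmod (x a) * cmod (A a b) * cmod (x b) \<le> cmod (A a b) * 1"
      by (intro mult_mono mult_left_le_one_le) auto
    thus "cmod (cnj (x a) * A a b * x b) \<le> cmod (A a b)"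
      by (simp add: norm_mult)
  qed
  finally show ?thesis .
qed

lemma hermitian_cong:
  "(\<And>a b. a < d \<Longrightarrow> b < d \<Longrightarrow> A a b = B a b) \<Longrightarrow> hermitian d B \<Longrightarrow> hermitian d A"
  unfolding hermitian_def by metis

lemma hermitian_diff: "hermitian d A \<Longrightarrow> hermitian d B \<Longrightarrow> hermitian d (\<lambda>a b. A a b - B a b)"
  unfolding hermitian_def by (metis complex_cnj_diff)

lemma hermitian_matvec_adjoint:
  assumes "hermitian d A"
  shows "cinner d x (matvec d A y) = cinner d (matvec d A x) y"
proof -
  have "cinner d x (matvec d A y) = (\<Sum>a<d. \<Sum>b<d. cnj (x a) * A a b * y b)"
    unfolding cinner_def matvec_def by (simp add: sum_distrib_left mult.assoc)
  also have "\<dots> = (\<Sum>b<d. \<Sum>a<d. cnj (x a) * A a b * y b)" by (rule sum.swap)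
  also have "\<dots> = (\<Sum>b<d. \<Sum>a<d. cnj (A b a * x a) * y b)"
  proof (intro sum.cong refl)
    fix a b assume "b \<in> {..<d}" "a \<in> {..<d}"
    hence "A a b = cnj (A b a)" using assms[unfolded hermitian_def, rule_format, of b a] by simp
    thus "cnj (x a) * A a b * y b = cnj (A b a * x a) * y b" by simp
  qed
  also have "\<dots> = cinner d (matvec d A x) y"
    unfolding cinner_def matvec_def cnj_sum sum_distrib_right ..
  finally show ?thesis .
qed

lemma hermitian_qform_real:
  assumes "hermitian d A"
  shows "qform d A x = complex_of_real (Re (qform d A x))"
proof -
  have "cnj (qform d A x) = cinner d (matvec d A x) x"
    unfolding qform_def by (rule cinner_commute[symmetric])
  also have "\<dots> = qform d A x" unfolding qform_def hermitian_matvec_adjoint[OF assms] ..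
  finally have "cnj (qform d A x) = qform d A x" .
  thus ?thesis by (simp add: complex_eq_iff)
qed

section \<open>Maxima over bounded closed sets of coordinate vectors\<close>

lemma real_bounded_convergent_subseq:
  fixes s :: "nat \<Rightarrow> real"
  assumes "\<And>k. \<bar>s k\<bar> \<le> B"
  shows "\<exists>r. strict_mono r \<and> convergent (\<lambda>k. s (r k))"
proof -
  obtain r where r: "strict_mono r" "monoseq (\<lambda>n. s (r n))" using seq_monosub by blast
  have "Bseq (\<lambda>n. s (r n))" using assms by (intro BseqI'[of _ B]) auto
  with r show ?thesis using Bseq_monoseq_convergent by blast
qed

lemma complex_bounded_convergent_subseq:
  fixes s :: "nat \<Rightarrow> complex"
  assumes "\<And>k. cmod (s k) \<le> B"
  shows "\<exists>r l. strict_mono r \<and> (\<lambda>k. s (r k)) \<longlonglongrightarrow> l"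
proof -
  have "\<bar>Re (s k)\<bar> \<le> B" for k using assms abs_Re_le_cmod order_trans by blast
  then obtain r1 a where r1: "strict_mono r1" "(\<lambda>k. Re (s (r1 k))) \<longlonglongrightarrow> a"
    using real_bounded_convergent_subseq[of "\<lambda>k. Re (s k)" B] unfolding convergent_def by blast
  have "\<bar>Im (s (r1 k))\<bar> \<le> B" for k using assms abs_Im_le_cmod order_trans by blast
  then obtain r2 b where r2: "strict_mono r2" "(\<lambda>k. Im (s (r1 (r2 k)))) \<longlonglongrightarrow> b"
    using real_bounded_convergent_subseq[of "\<lambda>k. Im (s (r1 k))" B] unfolding convergent_def by blast
  have "(\<lambda>k. Re (s (r1 (r2 k)))) \<longlonglongrightarrow> a"
    using LIMSEQ_subseq_LIMSEQ[OF r1(2) r2(1)] by (simp add: o_def)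
  hence "(\<lambda>k. Complex (Re (s (r1 (r2 k)))) (Im (s (r1 (r2 k))))) \<longlonglongrightarrow> Complex a b"
    using r2(2) by (rule tendsto_Complex)
  hence "(\<lambda>k. s ((r1 \<circ> r2) k)) \<longlonglongrightarrow> Complex a b" by simp
  moreover have "strict_mono (r1 \<circ> r2)" using r1 r2 by (simp add: strict_mono_o)
  ultimately show ?thesis by blast
qed

lemma finite_family_convergent_subseq:
  fixes X :: "nat \<Rightarrow> 'i \<Rightarrow> complex"
  assumes "finite I" "\<And>k i. i \<in> I \<Longrightarrow> cmod (X k i) \<le> B"
  shows "\<exists>r l. strict_mono r \<and> (\<forall>i\<in>I. (\<lambda>k. X (r k) i) \<longlonglongrightarrow> l i)"
  using assms
proof (induction I arbitrary: X rule: finite_induct)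
  case empty
  then show ?case by (auto intro: strict_mono_id)
next
  case (insert j I)
  from insert.IH[of X] insert.prems obtain r l where
    r: "strict_mono r" "\<forall>i\<in>I. (\<lambda>k. X (r k) i) \<longlonglongrightarrow> l i" by auto
  have "cmod (X (r k) j) \<le> B" for k using insert.prems by auto
  then obtain r2 lj where r2: "strict_mono r2" "(\<lambda>k. X (r (r2 k)) j) \<longlonglongrightarrow> lj"
    using complex_bounded_convergent_subseq[of "\<lambda>k. X (r k) j" B] by blast
  have "(\<lambda>k. X ((r \<circ> r2) k) i) \<longlonglongrightarrow> (l(j := lj)) i" if "i \<in> insert j I" for i
  proof (cases "i = j")
    case True thus ?thesis using r2 by simp
  next
    case False
    hence "i \<in> I" using that by auto
    thus ?thesis using LIMSEQ_subseq_LIMSEQ[OF r(2)[rule_format, OF \<open>i \<in> I\<close>] r2(1)] False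
      by (simp add: o_def)
  qed
  moreover have "strict_mono (r \<circ> r2)" using r r2 by (simp add: strict_mono_o)
  ultimately show ?case by blast
qed

lemma LIMSEQ_const_add_divide_Suc: "(\<lambda>k. c + t / (real k + 1)) \<longlonglongrightarrow> c"
proof -
  have "(\<lambda>k. c + t * inverse (real k + 1)) \<longlonglongrightarrow> c + t * 0"
    by (intro tendsto_add tendsto_mult tendsto_const)
      (use LIMSEQ_inverse_real_of_nat in \<open>simp add: add.commute\<close>)
  thus ?thesis by (simp add: divide_inverse)
qed

lemma inverse_subseq_le:
  assumes "strict_mono r"
  shows "1 / (real (r k) + 1) \<le> 1 / (real k + 1)"
  using seq_suble[OF assms, of k] by (simp add: frac_le)

lemma coordinatewise_closed_attains_max:
  fixes \<phi> :: "('i \<Rightarrow> complex) \<Rightarrow> real"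
  assumes fin: "finite I" and ne: "x0 \<in> S" and bnd: "\<And>x i. x \<in> S \<Longrightarrow> i \<in> I \<Longrightarrow> cmod (x i) \<le> B"
    and clo: "\<And>X l. (\<And>k. X k \<in> S) \<Longrightarrow> (\<forall>i\<in>I. (\<lambda>k. X k i) \<longlonglongrightarrow> l i) \<Longrightarrow> \<exists>y\<in>S. \<forall>i\<in>I. y i = l i"
    and cont: "\<And>X y. (\<forall>i\<in>I. (\<lambda>k. X k i) \<longlonglongrightarrow> y i) \<Longrightarrow> (\<lambda>k. \<phi> (X k)) \<longlonglongrightarrow> \<phi> y"
    and bdd: "\<And>x. x \<in> S \<Longrightarrow> \<phi> x \<le> C"
  shows "\<exists>x\<in>S. \<forall>y\<in>S. \<phi> y \<le> \<phi> x"
proof -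
  define s where "s = Sup (\<phi> ` S)"
  have bddA: "bdd_above (\<phi> ` S)" using bdd by (intro bdd_aboveI[of _ C]) auto
  have up: "\<phi> y \<le> s" if "y \<in> S" for y unfolding s_def using bddA that by (auto intro: cSup_upper)
  have "\<exists>x\<in>S. s - 1 / (real k + 1) < \<phi> x" for k
  proof -
    have "s - 1 / (real k + 1) < s" by simp
    then obtain z where "z \<in> \<phi> ` S" "s - 1 / (real k + 1) < z"
      unfolding s_def using less_cSupE[of _ "\<phi> ` S"] ne by blast
    thus ?thesis by auto
  qed
  then obtain X where X: "\<And>k. X k \<in> S" "\<And>k. s - 1 / (real k + 1) < \<phi> (X k)" by metis
  obtain r l where rl: "strict_mono r" "\<forall>i\<in>I. (\<lambda>k. X (r k) i) \<longlonglongrightarrow> l i"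
    using finite_family_convergent_subseq[OF fin, of X B] bnd X by blast
  obtain y where y: "y \<in> S" "\<forall>i\<in>I. y i = l i" using clo[of "\<lambda>k. X (r k)" l] X rl by blast
  have lim_y: "(\<lambda>k. \<phi> (X (r k))) \<longlonglongrightarrow> \<phi> y" using cont[of "\<lambda>k. X (r k)" y] rl y by auto
  have lower: "\<forall>k. s - 1 / (real k + 1) \<le> \<phi> (X (r k))"
    using X(2) inverse_subseq_le[OF rl(1)] by (smt (verit))
  have upper: "\<forall>k. \<phi> (X (r k)) \<le> s" using up X(1) by blast
  have "(\<lambda>k. s - 1 / (real k + 1)) \<longlonglongrightarrow> s" using LIMSEQ_const_add_divide_Suc[of s "-1"] by simp
  hence "(\<lambda>k. \<phi> (X (r k))) \<longlonglongrightarrow> s"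
    by (rule tendsto_sandwich[OF always_eventually[OF lower] always_eventually[OF upper] _ tendsto_const])
  hence "\<phi> y = s" using LIMSEQ_unique[OF lim_y] by simp
  thus ?thesis using y up by auto
qed

lemma tendsto_cinner:
  assumes "\<forall>i<d. (\<lambda>k. X k i) \<longlonglongrightarrow> x i" "\<forall>i<d. (\<lambda>k. Y k i) \<longlonglongrightarrow> y i"
  shows "(\<lambda>k. cinner d (X k) (Y k)) \<longlonglongrightarrow> cinner d x y"
  unfolding cinner_def using assms by (intro tendsto_sum tendsto_mult tendsto_cnj) auto

lemma tendsto_sqnorm:
  assumes "\<forall>i<d. (\<lambda>k. X k i) \<longlonglongrightarrow> x i"
  shows "(\<lambda>k. sqnorm d (X k)) \<longlonglongrightarrow> sqnorm d x"
  unfolding sqnorm_def using assms by (intro tendsto_sum tendsto_power tendsto_norm) auto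

lemma tendsto_qform:
  assumes "\<forall>i<d. (\<lambda>k. X k i) \<longlonglongrightarrow> x i"
  shows "(\<lambda>k. qform d A (X k)) \<longlonglongrightarrow> qform d A x"
  unfolding qform_expand using assms by (intro tendsto_sum tendsto_mult tendsto_cnj tendsto_const) auto

section \<open>The spectral theorem for Hermitian matrices\<close>

lemma orthonormalD: "orthonormal d n e \<Longrightarrow> i < n \<Longrightarrow> j < n \<Longrightarrow> cinner d (e i) (e j) = (if i = j then 1 else 0)"
  unfolding orthonormal_def by auto

lemma orthogonal_unit_exists:
  assumes nd: "n < d" and on: "orthonormal d n e"
  shows "\<exists>w. sqnorm d w = 1 \<and> (\<forall>j<n. cinner d (e j) w = 0)"
proof -
  text \<open>Project the standard basis vectors onto the orthogonal complement; if all projections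
    vanished, the \<open>e j\<close> would span \<open>\<complex>\<^sup>d\<close>, forcing \<open>n = d\<close>.\<close>
  define pr where "pr a = (\<lambda>b. (if b = a then 1 else 0) - (\<Sum>j<n. cnj (e j a) * e j b))" for a
  have orth_pr: "cinner d (e i) (pr a) = 0" if "i < n" "a < d" for i a
  proof -
    have "cinner d (e i) (pr a) = cnj (e i a) - (\<Sum>j<n. cnj (e j a) * cinner d (e i) (e j))"
      unfolding pr_def using that
      by (simp add: cinner_diff_right cinner_unit_right cinner_sum_right cinner_scale_right)
    also have "(\<Sum>j<n. cnj (e j a) * cinner d (e i) (e j)) = (\<Sum>j<n. if j = i then cnj (e j a) else 0)"
      using on that unfolding orthonormal_def by (intro sum.cong) auto
    finally show ?thesis using that by simp
  qed
  show ?thesis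
  proof (cases "\<exists>a<d. sqnorm d (pr a) \<noteq> 0")
    case True
    then obtain a where a: "a < d" "sqnorm d (pr a) \<noteq> 0" by blast
    define c where "c = complex_of_real (1 / sqrt (sqnorm d (pr a)))"
    have "sqnorm d (pr a) > 0" using a sqnorm_nonneg[of d "pr a"] by linarith
    hence "sqnorm d (\<lambda>b. c * pr a b) = 1" unfolding c_def by (rule sqnorm_normalize)
    moreover have "\<forall>j<n. cinner d (e j) (\<lambda>b. c * pr a b) = 0"
      using orth_pr a by (simp add: cinner_scale_right)
    ultimately show ?thesis by blast
  next
    case False
    hence "pr a a = 0" if "a < d" for a using that sqnorm_eq_0_iff by blast
    hence one: "(\<Sum>j<n. complex_of_real ((cmod (e j a))^2)) = 1" if "a < d" for a
      using that unfolding pr_def by (simp add: cnj_mult_self)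
    have "complex_of_real (real d) = (\<Sum>a<d. \<Sum>j<n. complex_of_real ((cmod (e j a))^2))"
      using one by simp
    also have "\<dots> = (\<Sum>j<n. cinner d (e j) (e j))"
      unfolding cinner_self sqnorm_def by (simp add: sum.swap[of _ "{..<d}"])
    also have "\<dots> = of_nat n" using on unfolding orthonormal_def by simp
    finally have "d = n" by (metis of_nat_eq_iff of_real_of_nat_eq)
    thus ?thesis using nd by simp
  qed
qed

lemma nonneg_of_quadratic_lower_bound:
  fixes b c :: real
  assumes "\<And>s. 0 < s \<Longrightarrow> s \<le> 1 \<Longrightarrow> 0 \<le> 2 * s * b + s^2 * c"
  shows "0 \<le> b"
proof (rule ccontr)
  assume "\<not> 0 \<le> b"
  define s where "s = min 1 (- b / (\<bar>c\<bar> + 1))"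
  have "0 < - b / (\<bar>c\<bar> + 1)" using \<open>\<not> 0 \<le> b\<close> by (intro divide_pos_pos) auto
  hence s: "0 < s" "s \<le> 1" unfolding s_def by auto
  have "s * \<bar>c\<bar> \<le> (- b / (\<bar>c\<bar> + 1)) * \<bar>c\<bar>" unfolding s_def by (intro mult_right_mono) auto
  also have "\<dots> \<le> - b" using \<open>\<not> 0 \<le> b\<close> by (simp add: divide_le_eq field_simps)
  finally have "2 * b + s * c < 0" using \<open>\<not> 0 \<le> b\<close> abs_ge_self[of c] s(1)
    by (smt (verit) mult_left_mono)
  hence "s * (2 * b + s * c) < 0" using s(1) by (simp add: mult_pos_neg)
  thus False using assms[OF s] by (simp add: power2_eq_square algebra_simps)
qed

lemma qform_attains_max_on_complement:
  assumes nd: "n < d" and on: "orthonormal d n e"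
  defines "S \<equiv> {w. sqnorm d w = 1 \<and> (\<forall>j<n. cinner d (e j) w = 0)}"
  shows "\<exists>x\<in>S. \<forall>y\<in>S. Re (qform d A y) \<le> Re (qform d A x)"
proof -
  obtain w0 where w0: "w0 \<in> S" using orthogonal_unit_exists[OF nd on] unfolding S_def by blast
  show ?thesis
  proof (rule coordinatewise_closed_attains_max[where I="{..<d}" and B=1 and C="\<Sum>a<d. \<Sum>b<d. cmod (A a b)", OF _ w0])
    show "cmod (x i) \<le> 1" if "x \<in> S" "i \<in> {..<d}" for x i
      using that norm_le_one_of_sqnorm unfolding S_def by auto
  next
    fix X :: "nat \<Rightarrow> nat \<Rightarrow> complex" and l
    assume X: "\<And>k. X k \<in> S" and "\<forall>i\<in>{..<d}. (\<lambda>k. X k i) \<longlonglongrightarrow> l i"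
    hence l: "\<forall>i<d. (\<lambda>k. X k i) \<longlonglongrightarrow> l i" by auto
    have "sqnorm d l = 1"
      using LIMSEQ_unique[OF tendsto_sqnorm[OF l]] X unfolding S_def by auto
    moreover have "cinner d (e j) l = 0" if "j < n" for j
      using LIMSEQ_unique[OF tendsto_cinner[OF _ l, of "\<lambda>k. e j" "e j"]] X that unfolding S_def by auto
    ultimately show "\<exists>y\<in>S. \<forall>i\<in>{..<d}. y i = l i" unfolding S_def by auto
  next
    fix X :: "nat \<Rightarrow> nat \<Rightarrow> complex" and y assume "\<forall>i\<in>{..<d}. (\<lambda>k. X k i) \<longlonglongrightarrow> y i"
    thus "(\<lambda>k. Re (qform d A (X k))) \<longlonglongrightarrow> Re (qform d A y)" by (intro tendsto_Re tendsto_qform) auto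
  next
    fix x assume "x \<in> S"
    hence "cmod (qform d A x) \<le> (\<Sum>a<d. \<Sum>b<d. cmod (A a b))" using qform_bound unfolding S_def by auto
    thus "Re (qform d A x) \<le> (\<Sum>a<d. \<Sum>b<d. cmod (A a b))" using complex_Re_le_cmod order_trans by blast
  qed auto
qed

lemma rayleigh_max_on_complement:
  assumes nd: "n < d" and on: "orthonormal d n e"
  shows "\<exists>x. sqnorm d x = 1 \<and> (\<forall>j<n. cinner d (e j) x = 0) \<and>
           (\<forall>z. (\<forall>j<n. cinner d (e j) z = 0) \<longrightarrow> Re (qform d A z) \<le> Re (qform d A x) * sqnorm d z)"
proof -
  define S where "S = {w. sqnorm d w = 1 \<and> (\<forall>j<n. cinner d (e j) w = 0)}"
  obtain x where xS: "x \<in> S" and xmax: "\<And>y. y \<in> S \<Longrightarrow> Re (qform d A y) \<le> Re (qform d A x)"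
    using qform_attains_max_on_complement[OF nd on, of A] unfolding S_def by blast
  have "Re (qform d A z) \<le> Re (qform d A x) * sqnorm d z" if zo: "\<forall>j<n. cinner d (e j) z = 0" for z
  proof (cases "sqnorm d z = 0")
    case True
    hence "qform d A z = 0" by (intro qform_zero) (simp add: sqnorm_eq_0_iff)
    thus ?thesis using True by simp
  next
    case False
    hence pos: "sqnorm d z > 0" using sqnorm_nonneg[of d z] by linarith
    define c where "c = complex_of_real (1 / sqrt (sqnorm d z))"
    have "\<forall>j<n. cinner d (e j) (\<lambda>a. c * z a) = 0" using zo by (simp only: cinner_scale_right) simp
    hence "(\<lambda>a. c * z a) \<in> S" unfolding S_def using sqnorm_normalize[OF pos] unfolding c_def by simp
    hence "Re (qform d A (\<lambda>a. c * z a)) \<le> Re (qform d A x)" by (rule xmax)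
    moreover have "qform d A (\<lambda>a. c * z a) = complex_of_real (1 / sqnorm d z) * qform d A z"
      unfolding qform_scale c_def using pos by (simp flip: of_real_mult)
    ultimately show ?thesis using pos by (simp add: divide_le_eq mult.commute)
  qed
  thus ?thesis using xS unfolding S_def by blast
qed

text \<open>A maximiser of the Rayleigh quotient on the orthogonal complement of eigenvectors is itself an
  eigenvector: the residual \<open>y = A x - \<lambda> x\<close> is orthogonal to \<open>x\<close> and to the \<open>e j\<close>, and moving
  \<open>x\<close> in the direction \<open>y\<close> increases the quotient to first order by \<open>2 \<parallel>y\<parallel>\<^sup>2\<close>.\<close>

lemma rayleigh_maximiser_eigenvector:
  assumes h: "hermitian d A" and on: "orthonormal d n e"
    and ev: "\<forall>j<n. \<forall>a<d. matvec d A (e j) a = complex_of_real (t j) * e j a"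
    and x1: "sqnorm d x = 1" and xo: "\<forall>j<n. cinner d (e j) x = 0"
    and xmax: "\<And>z. \<forall>j<n. cinner d (e j) z = 0 \<Longrightarrow> Re (qform d A z) \<le> Re (qform d A x) * sqnorm d z"
  shows "\<forall>a<d. matvec d A x a = complex_of_real (Re (qform d A x)) * x a"
proof -
  define l where "l = Re (qform d A x)"
  define y where "y = (\<lambda>a. matvec d A x a - complex_of_real l * x a)"
  define N where "N = sqnorm d y"
  have qfx: "qform d A x = complex_of_real l" unfolding l_def by (rule hermitian_qform_real[OF h])
  have yo: "cinner d (e j) y = 0" if "j < n" for j
  proof -
    have "cinner d (e j) (matvec d A x) = cinner d (\<lambda>a. complex_of_real (t j) * e j a) x"
      unfolding hermitian_matvec_adjoint[OF h] using ev that by (intro cinner_cong) auto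
    thus ?thesis unfolding y_def using xo that by (simp add: cinner_diff_right cinner_scale_right cinner_scale_left)
  qed
  have xy: "cinner d x y = 0"
    unfolding y_def using qfx x1 by (simp add: cinner_diff_right cinner_scale_right cinner_self qform_def[symmetric])
  hence yx: "cinner d y x = 0" using cinner_commute[of d y x] by simp
  have Ax: "matvec d A x = (\<lambda>a. y a + complex_of_real l * x a)" unfolding y_def by simp
  have yAx: "cinner d y (matvec d A x) = complex_of_real N"
    unfolding Ax N_def using yx by (simp add: cinner_add_right cinner_scale_right cinner_self)
  have xAy: "cinner d x (matvec d A y) = complex_of_real N"
    unfolding hermitian_matvec_adjoint[OF h] Ax N_def using xy by (simp add: cinner_add_left cinner_scale_left cinner_self)
  have "0 \<le> 2 * s * (- N) + s^2 * (l * N - Re (qform d A y))" for s :: real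
  proof -
    define z where "z = (\<lambda>a. x a + complex_of_real s * y a)"
    have "\<forall>j<n. cinner d (e j) z = 0" unfolding z_def using xo yo by (simp add: cinner_add_right cinner_scale_right)
    hence le: "Re (qform d A z) \<le> l * sqnorm d z" unfolding l_def by (rule xmax)
    have "complex_of_real (sqnorm d z) = 1 + complex_of_real (s^2 * N)"
      unfolding cinner_self[symmetric] z_def cinner_expand_pencil using xy yx x1 by (simp add: cinner_self N_def)
    hence "sqnorm d z = 1 + s^2 * N" by (metis of_real_1 of_real_add of_real_eq_iff)
    moreover have "qform d A z = cinner d z (\<lambda>a. 1 * matvec d A x a + complex_of_real s * matvec d A y a)"
      unfolding qform_def z_def by (subst matvec_lincomb[symmetric]) simp
    hence "Re (qform d A z) = l + 2 * s * N + s^2 * Re (qform d A y)"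
      unfolding z_def cinner_expand_pencil qform_def using xAy yAx qfx by (simp add: qform_def)
    ultimately show ?thesis using le by (simp add: algebra_simps)
  qed
  hence "0 \<le> - N" using nonneg_of_quadratic_lower_bound by blast
  hence "N = 0" using sqnorm_nonneg[of d y] unfolding N_def by linarith
  thus ?thesis using sqnorm_eq_0_iff unfolding N_def y_def l_def by simp
qed

lemma hermitian_orthonormal_eigenvectors:
  assumes h: "hermitian d A"
  shows "n \<le> d \<Longrightarrow> \<exists>e t. orthonormal d n e \<and> (\<forall>j<n. \<forall>a<d. matvec d A (e j) a = complex_of_real (t j) * e j a)"
proof (induction n)
  case 0 show ?case unfolding orthonormal_def by auto
next
  case (Suc n)
  then obtain e t where on: "orthonormal d n e"
    and ev: "\<forall>j<n. \<forall>a<d. matvec d A (e j) a = complex_of_real (t j) * e j a" by auto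
  obtain w where w: "sqnorm d w = 1" "\<forall>j<n. cinner d (e j) w = 0"
    and wmax: "\<And>z. \<forall>j<n. cinner d (e j) z = 0 \<Longrightarrow> Re (qform d A z) \<le> Re (qform d A w) * sqnorm d z"
    using rayleigh_max_on_complement[OF _ on, of A] Suc.prems by auto
  have wev: "\<forall>a<d. matvec d A w a = complex_of_real (Re (qform d A w)) * w a"
    by (rule rayleigh_maximiser_eigenvector[OF h on ev w wmax])
  define e' where "e' = e(n := w)"
  define t' where "t' = t(n := Re (qform d A w))"
  have "orthonormal d (Suc n) e'"
    unfolding orthonormal_def
  proof (intro allI impI)
    fix i j assume "i < Suc n" "j < Suc n"
    thus "cinner d (e' i) (e' j) = (if i = j then 1 else 0)"
      using on w unfolding orthonormal_def e'_def
      by (cases "i = n"; cases "j = n") (auto simp: cinner_self cinner_commute[of d w])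
  qed
  moreover have "\<forall>j<Suc n. \<forall>a<d. matvec d A (e' j) a = complex_of_real (t' j) * e' j a"
    using ev wev unfolding e'_def t'_def by (auto simp: less_Suc_eq)
  ultimately show ?case by blast
qed

theorem hermitian_eigenbasis:
  assumes "hermitian d A"
  shows "\<exists>e t. orthonormal d d e \<and> (\<forall>j<d. \<forall>a<d. matvec d A (e j) a = complex_of_real (t j) * e j a)"
  using hermitian_orthonormal_eigenvectors[OF assms] by auto

lemma mat_adjoint_index:
  assumes "A \<in> carrier_mat n m"
  shows "mat_adjoint A = mat m n (\<lambda>(i,j). cnj (A $$ (j,i)))"
  using assms unfolding mat_adjoint_def by (intro eq_matI) (auto simp: mat_of_rows_index)

lemma orthonormal_completeness:
  assumes on: "orthonormal d d e" and ab: "a < d" "b < d"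
  shows "(\<Sum>j<d. e j a * cnj (e j b)) = (if a = b then 1 else 0)"
proof -
  define U where "U = mat d d (\<lambda>(a,j). e j a)"
  have U: "U \<in> carrier_mat d d" unfolding U_def by simp
  have aU: "mat_adjoint U \<in> carrier_mat d d" using mat_adjoint_index[OF U] by simp
  have "mat_adjoint U * U = 1\<^sub>m d"
  proof (rule eq_matI)
    fix i j assume ij: "i < dim_row (1\<^sub>m d)" "j < dim_col (1\<^sub>m d)"
    have "(mat_adjoint U * U) $$ (i,j) = cinner d (e i) (e j)"
      using ij U unfolding mat_adjoint_index[OF U]
      by (simp add: scalar_prod_def U_def atLeast0LessThan cinner_def)
    also have "\<dots> = 1\<^sub>m d $$ (i,j)" using on ij unfolding orthonormal_def by simp
    finally show "(mat_adjoint U * U) $$ (i,j) = 1\<^sub>m d $$ (i,j)" .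
  qed (use aU U in auto)
  hence I: "U * mat_adjoint U = 1\<^sub>m d" using mat_mult_left_right_inverse[OF aU U] by simp
  have "(U * mat_adjoint U) $$ (a,b) = (\<Sum>j<d. e j a * cnj (e j b))"
    using ab U unfolding mat_adjoint_index[OF U] by (simp add: scalar_prod_def U_def atLeast0LessThan)
  thus ?thesis using I ab by simp
qed

locale eigenbasis =
  fixes d :: nat and A :: "nat \<Rightarrow> nat \<Rightarrow> complex" and e :: "nat \<Rightarrow> nat \<Rightarrow> complex" and t :: "nat \<Rightarrow> real"
  assumes orthonormal: "orthonormal d d e"
    and eigen: "\<And>j a. j < d \<Longrightarrow> a < d \<Longrightarrow> matvec d A (e j) a = complex_of_real (t j) * e j a"
begin

lemma expand: "a < d \<Longrightarrow> x a = (\<Sum>j<d. cinner d (e j) x * e j a)"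
proof -
  assume a: "a < d"
  have "(\<Sum>j<d. cinner d (e j) x * e j a) = (\<Sum>j<d. \<Sum>b<d. x b * (e j a * cnj (e j b)))"
    unfolding cinner_def by (intro sum.cong refl) (simp add: sum_distrib_left mult.commute mult.left_commute)
  also have "\<dots> = (\<Sum>b<d. x b * (\<Sum>j<d. e j a * cnj (e j b)))"
    by (subst sum.swap) (simp add: sum_distrib_left)
  also have "\<dots> = (\<Sum>b<d. if a = b then x b else 0)"
    using orthonormal_completeness[OF orthonormal a] by (intro sum.cong) auto
  finally show ?thesis using a by simp
qed

lemma parseval: "cinner d x y = (\<Sum>j<d. cnj (cinner d (e j) x) * cinner d (e j) y)"
proof -
  have "cinner d x y = cinner d x (\<lambda>a. \<Sum>j<d. cinner d (e j) y * e j a)"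
    using expand by (intro cinner_cong) auto
  also have "\<dots> = (\<Sum>j<d. cinner d (e j) y * cinner d x (e j))"
    by (simp add: cinner_sum_right cinner_scale_right)
  also have "\<dots> = (\<Sum>j<d. cnj (cinner d (e j) x) * cinner d (e j) y)"
    by (intro sum.cong refl) (simp add: cinner_commute[of d x])
  finally show ?thesis .
qed

lemma sqnorm_eq: "sqnorm d x = (\<Sum>j<d. (cmod (cinner d (e j) x))^2)"
proof -
  have "complex_of_real (sqnorm d x) = complex_of_real (\<Sum>j<d. (cmod (cinner d (e j) x))^2)"
    using parseval[of x x] by (simp add: cinner_self cnj_mult_self)
  thus ?thesis using of_real_eq_iff by blast
qed

lemma matvec_eq: "a < d \<Longrightarrow> matvec d A x a = (\<Sum>j<d. complex_of_real (t j) * cinner d (e j) x * e j a)"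
proof -
  assume a: "a < d"
  have "matvec d A x a = matvec d A (\<lambda>b. \<Sum>j<d. cinner d (e j) x * e j b) a"
    unfolding matvec_def using expand by (intro sum.cong) auto
  also have "\<dots> = (\<Sum>j<d. \<Sum>b<d. cinner d (e j) x * (A a b * e j b))"
    unfolding matvec_def by (subst sum.swap) (simp add: sum_distrib_left algebra_simps)
  also have "\<dots> = (\<Sum>j<d. cinner d (e j) x * matvec d A (e j) a)"
    unfolding matvec_def by (simp add: sum_distrib_left)
  also have "\<dots> = (\<Sum>j<d. complex_of_real (t j) * cinner d (e j) x * e j a)"
    using eigen a by (intro sum.cong) auto
  finally show ?thesis .
qed

lemma qform_eq: "qform d A x = complex_of_real (\<Sum>j<d. t j * (cmod (cinner d (e j) x))^2)"
proof -
  have "qform d A x = cinner d x (\<lambda>a. \<Sum>j<d. complex_of_real (t j) * cinner d (e j) x * e j a)"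
    unfolding qform_def using matvec_eq by (intro cinner_cong) auto
  also have "\<dots> = (\<Sum>j<d. complex_of_real (t j) * cinner d (e j) x * cinner d x (e j))"
    by (simp add: cinner_sum_right cinner_scale_right)
  also have "\<dots> = (\<Sum>j<d. complex_of_real (t j) * complex_of_real ((cmod (cinner d (e j) x))^2))"
    by (intro sum.cong refl) (simp add: cinner_commute[of d x] mult_cnj_self mult.assoc)
  finally show ?thesis by simp
qed

lemma sqnorm_eigenvector: "j < d \<Longrightarrow> sqnorm d (e j) = 1"
  using orthonormalD[OF orthonormal, of j j] cinner_self[of d "e j"] by simp

lemma qform_eigenvector: "j < d \<Longrightarrow> qform d A (e j) = complex_of_real (t j)"
proof -
  assume j: "j < d"
  have "qform d A (e j) = cinner d (e j) (\<lambda>a. complex_of_real (t j) * e j a)"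
    unfolding qform_def using eigen j by (intro cinner_cong) auto
  thus ?thesis using orthonormalD[OF orthonormal j j] by (simp add: cinner_scale_right)
qed

lemma entry_eq: "a < d \<Longrightarrow> b < d \<Longrightarrow> A a b = (\<Sum>j<d. complex_of_real (t j) * e j a * cnj (e j b))"
proof -
  assume ab: "a < d" "b < d"
  have "A a b = matvec d A (\<lambda>c. if c = b then 1 else 0) a"
    unfolding matvec_def using ab by (simp add: if_distrib sum.delta cong: if_cong)
  also have "\<dots> = (\<Sum>j<d. complex_of_real (t j) * e j a * cnj (e j b))"
    unfolding matvec_eq[OF ab(1)] using ab by (intro sum.cong refl) (simp add: cinner_unit_right)
  finally show ?thesis .
qed

lemma trace_eq: "(\<Sum>a<d. A a a) = complex_of_real (\<Sum>j<d. t j)"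
proof -
  have "(\<Sum>a<d. A a a) = (\<Sum>a<d. \<Sum>j<d. complex_of_real (t j) * (cnj (e j a) * e j a))"
    using entry_eq by (intro sum.cong) (auto simp: algebra_simps)
  also have "\<dots> = (\<Sum>j<d. complex_of_real (t j) * cinner d (e j) (e j))"
    unfolding cinner_def by (subst sum.swap) (simp add: sum_distrib_left)
  finally show ?thesis using orthonormalD[OF orthonormal] by simp
qed

lemma qform_le_max_eigenvalue:
  assumes "\<And>j. j < d \<Longrightarrow> t j \<le> \<mu>"
  shows "Re (qform d A x) \<le> \<mu> * sqnorm d x"
proof -
  have "Re (qform d A x) = (\<Sum>j<d. t j * (cmod (cinner d (e j) x))^2)" using qform_eq by simp
  also have "\<dots> \<le> (\<Sum>j<d. \<mu> * (cmod (cinner d (e j) x))^2)"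
    using assms by (intro sum_mono mult_right_mono) auto
  finally show ?thesis by (simp add: sqnorm_eq sum_distrib_left)
qed

lemma square_entry_eq:
  assumes h: "hermitian d A" and ab: "a < d" "b < d"
  shows "(\<Sum>c<d. A a c * A c b) = (\<Sum>j<d. complex_of_real ((t j)^2) * e j a * cnj (e j b))"
proof -
  have col: "cinner d (e j) (\<lambda>c. A c b) = complex_of_real (t j) * cnj (e j b)" if j: "j < d" for j
  proof -
    have "cinner d (e j) (\<lambda>c. A c b) = cinner d (e j) (matvec d A (\<lambda>c. if c = b then 1 else 0))"
      using ab unfolding matvec_def by (intro cinner_cong) (auto simp: if_distrib sum.delta cong: if_cong)
    also have "\<dots> = cinner d (\<lambda>c. complex_of_real (t j) * e j c) (\<lambda>c. if c = b then 1 else 0)"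
      unfolding hermitian_matvec_adjoint[OF h] using eigen j by (intro cinner_cong) auto
    finally show ?thesis using ab by (simp only: cinner_scale_left cinner_unit_right) simp
  qed
  have "(\<Sum>c<d. A a c * A c b) = matvec d A (\<lambda>c. A c b) a" unfolding matvec_def ..
  also have "\<dots> = (\<Sum>j<d. complex_of_real ((t j)^2) * e j a * cnj (e j b))"
    unfolding matvec_eq[OF ab(1)] using col by (intro sum.cong refl) (simp add: power2_eq_square)
  finally show ?thesis .
qed

end

lemma hermitian_eigenbasisE:
  assumes "hermitian d A"
  obtains e t where "eigenbasis d A e t"
  using hermitian_eigenbasis[OF assms] eigenbasis.intro by blast

section \<open>Trace norm of a Hermitian matrix\<close>

lemma linear_factors_inj:
  fixes M N :: "complex multiset"
  shows "(\<Prod>a\<in>#M. [:-a, 1:]) = (\<Prod>a\<in>#N. [:-a, 1:]) \<Longrightarrow> M = N"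
proof (induction M arbitrary: N)
  case empty
  show ?case
  proof (rule ccontr)
    assume "{#} \<noteq> N"
    then obtain b where b: "b \<in># N" by (metis multiset_nonemptyE)
    have "poly (\<Prod>a\<in>#N. [:-a, 1:]) b = (\<Prod>a\<in>#N. poly [:-a, 1:] b)" by (rule poly_prod_mset)
    also have "\<dots> = 0" using b by (auto simp: prod_mset_zero_iff)
    finally show False using empty.prems by simp
  qed
next
  case (add a M)
  have "poly (\<Prod>x\<in>#N. [:-x, 1:]) a = poly (\<Prod>x\<in>#add_mset a M. [:-x, 1:]) a" using add.prems by simp
  hence "(\<Prod>x\<in>#N. poly [:-x, 1:] a) = 0" by (simp add: poly_prod_mset)
  hence "a \<in># N" by (auto simp: prod_mset_zero_iff)
  define N' where "N' = N - {#a#}"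
  have N: "N = add_mset a N'" unfolding N'_def using \<open>a \<in># N\<close> by simp
  have "[:-a, 1:] * (\<Prod>x\<in>#M. [:-x, 1:]) = [:-a, 1:] * (\<Prod>x\<in>#N'. [:-x, 1:])"
    using add.prems unfolding N by simp
  moreover have nz: "[:-a, 1::complex:] \<noteq> 0" by simp
  ultimately have "(\<Prod>x\<in>#M. [:-x, 1:]) = (\<Prod>x\<in>#N'. [:-x, 1:])" by (simp only: mult_left_cancel[OF nz])
  hence "M = N'" by (rule add.IH)
  thus ?case using N by simp
qed

lemma trace_norm_eqI:
  assumes "char_poly (mat_adjoint A * A) = (\<Prod>a\<leftarrow>as. [:- a, 1:])"
  shows "trace_norm A = (\<Sum>a\<leftarrow>as. sqrt (cmod a))"
proof -
  have uniq: "(\<Sum>a\<leftarrow>bs. sqrt (cmod a)) = (\<Sum>a\<leftarrow>as. sqrt (cmod a))"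
    if "char_poly (mat_adjoint A * A) = (\<Prod>a\<leftarrow>bs. [:- a, 1:])" for bs
  proof -
    have "(\<Prod>a\<in>#mset xs. [:-a, 1:]) = (\<Prod>a\<leftarrow>xs. [:-a, 1:])" for xs :: "complex list"
      by (simp add: prod_mset_prod_list flip: mset_map)
    hence "(\<Prod>a\<in>#mset bs. [:-a, 1:]) = (\<Prod>a\<in>#mset as. [:-a, 1:])"
      using that assms by simp
    hence "mset bs = mset as" by (rule linear_factors_inj)
    hence "sum_mset (mset (map (\<lambda>a. sqrt (cmod a)) bs)) = sum_mset (mset (map (\<lambda>a. sqrt (cmod a)) as))"
      by simp
    thus ?thesis by (simp only: sum_mset_sum_list)
  qed
  have "\<exists>s bs. char_poly (mat_adjoint A * A) = (\<Prod>a\<leftarrow>bs. [:- a, 1:]) \<and> s = (\<Sum>a\<leftarrow>bs. sqrt (cmod a))"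
    using assms by blast
  thus ?thesis unfolding trace_norm_def by (rule someI2_ex) (use uniq in blast)
qed

lemma mat_adjoint_hermitian:
  assumes M: "M \<in> carrier_mat d d" and h: "hermitian d (\<lambda>a b. M $$ (a,b))"
  shows "mat_adjoint M = M"
proof (rule eq_matI)
  fix i j assume "i < dim_row M" "j < dim_col M"
  hence ij: "i < d" "j < d" using M by auto
  have "M $$ (j,i) = cnj (M $$ (i,j))" using h[unfolded hermitian_def, rule_format, OF ij] .
  thus "mat_adjoint M $$ (i,j) = M $$ (i,j)" using ij M by (simp add: mat_adjoint_index[OF M])
qed (use M mat_adjoint_index[OF M] in auto)

text \<open>\<open>M\<^sup>H M = M\<^sup>2\<close> is unitarily similar to the diagonal matrix of the squared eigenvalues.\<close>

lemma char_poly_hermitian_square: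
  assumes M: "M \<in> carrier_mat d d" and h: "hermitian d (\<lambda>a b. M $$ (a,b))"
    and es: "eigenbasis d (\<lambda>a b. M $$ (a,b)) e t"
  shows "char_poly (mat_adjoint M * M) = (\<Prod>a\<leftarrow>map (\<lambda>i. complex_of_real ((t i)^2)) [0..<d]. [:- a, 1:])"
proof -
  interpret eigenbasis d "\<lambda>a b. M $$ (a,b)" e t by (rule es)
  define U where "U = mat d d (\<lambda>(a,j). e j a)"
  define Ua where "Ua = mat d d (\<lambda>(j,b). cnj (e j b))"
  define D2 where "D2 = mat d d (\<lambda>(i,j). if i = j then complex_of_real ((t i)^2) else 0)"
  have U: "U \<in> carrier_mat d d" and Ua: "Ua \<in> carrier_mat d d" and D2: "D2 \<in> carrier_mat d d"
    unfolding U_def Ua_def D2_def by auto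
  have UUa: "U * Ua = 1\<^sub>m d"
    by (rule eq_matI)
      (auto simp: scalar_prod_def U_def Ua_def atLeast0LessThan orthonormal_completeness[OF orthonormal])
  have UaU: "Ua * U = 1\<^sub>m d"
    by (rule eq_matI)
      (auto simp: scalar_prod_def U_def Ua_def atLeast0LessThan cinner_def[symmetric] orthonormalD[OF orthonormal])
  have MM: "mat_adjoint M * M = U * D2 * Ua"
  proof (rule eq_matI)
    fix a b assume "a < dim_row (U * D2 * Ua)" "b < dim_col (U * D2 * Ua)"
    hence ab: "a < d" "b < d" using U Ua D2 by auto
    have UD: "(U * D2) $$ (a,j) = e j a * complex_of_real ((t j)^2)" if "j < d" for j
      using ab that by (simp add: scalar_prod_def U_def D2_def if_distrib sum.delta cong: if_cong)
    have "(U * D2 * Ua) $$ (a,b) = (\<Sum>j<d. complex_of_real ((t j)^2) * e j a * cnj (e j b))"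
      using ab U D2 UD by (auto simp: scalar_prod_def Ua_def atLeast0LessThan intro!: sum.cong)
    also have "\<dots> = (\<Sum>c<d. M $$ (a,c) * M $$ (c,b))" using square_entry_eq[OF h ab] by simp
    also have "\<dots> = (mat_adjoint M * M) $$ (a,b)"
      unfolding mat_adjoint_hermitian[OF M h] using M ab by (simp add: scalar_prod_def atLeast0LessThan)
    finally show "(mat_adjoint M * M) $$ (a,b) = (U * D2 * Ua) $$ (a,b)" by simp
  qed (use M U Ua D2 mat_adjoint_index[OF M] in auto)
  have "similar_mat (mat_adjoint M * M) D2"
    by (rule similar_matI[of _ _ _ _ d, OF _ UUa UaU MM]) (use M D2 U Ua mat_adjoint_hermitian[OF M h] in auto)
  hence "char_poly (mat_adjoint M * M) = char_poly D2" by (rule char_poly_similar)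
  also have "\<dots> = (\<Prod>a\<leftarrow>diag_mat D2. [:- a, 1:])"
    by (rule char_poly_upper_triangular[OF D2]) (auto simp: upper_triangular_def D2_def)
  also have "diag_mat D2 = map (\<lambda>i. complex_of_real ((t i)^2)) [0..<d]"
    unfolding diag_mat_def using D2 by (auto simp: D2_def)
  finally show ?thesis .
qed

lemma trace_norm_hermitian:
  assumes M: "M \<in> carrier_mat d d" and h: "hermitian d (\<lambda>a b. M $$ (a,b))"
    and es: "eigenbasis d (\<lambda>a b. M $$ (a,b)) e t"
  shows "trace_norm M = (\<Sum>j<d. \<bar>t j\<bar>)"
proof -
  have "trace_norm M = (\<Sum>a\<leftarrow>map (\<lambda>i. complex_of_real ((t i)^2)) [0..<d]. sqrt (cmod a))"
    by (rule trace_norm_eqI[OF char_poly_hermitian_square[OF assms]])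
  also have "\<dots> = (\<Sum>i\<leftarrow>[0..<d]. \<bar>t i\<bar>)"
    by (simp add: o_def norm_power del: of_real_power)
  finally show ?thesis by (simp add: sum_set_upt_conv_sum_list_nat[symmetric] atLeast0LessThan)
qed

text \<open>Two eigenvectors with positive eigenvalues would have a combination orthogonal to \<open>\<psi>\<close>.\<close>

lemma (in eigenbasis) positive_eigenvalue_unique:
  assumes nonpos: "\<And>x. cinner d x \<psi> = 0 \<Longrightarrow> Re (qform d A x) \<le> 0"
    and ij: "i < d" "j < d" "i \<noteq> j" and pos: "t i > 0"
  shows "t j \<le> 0"
proof (rule ccontr)
  assume "\<not> t j \<le> 0"
  show False
  proof (cases "cinner d (e j) \<psi> = 0")
    case True
    thus False using nonpos[OF True] qform_eigenvector[OF ij(2)] \<open>\<not> t j \<le> 0\<close> by simp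
  next
    case False
    define \<alpha> where "\<alpha> = cnj (cinner d (e j) \<psi>)"
    define \<beta> where "\<beta> = - cnj (cinner d (e i) \<psi>)"
    define x where "x = (\<lambda>a. \<alpha> * e i a + \<beta> * e j a)"
    have "cinner d x \<psi> = cnj \<alpha> * cinner d (e i) \<psi> + cnj \<beta> * cinner d (e j) \<psi>"
      unfolding x_def by (simp add: cinner_add_left cinner_scale_left)
    hence "Re (qform d A x) \<le> 0" unfolding \<alpha>_def \<beta>_def by (intro nonpos) simp
    moreover have "qform d A x = cinner d x (\<lambda>a. \<alpha> * (complex_of_real (t i) * e i a) + \<beta> * (complex_of_real (t j) * e j a))"
      unfolding qform_def x_def using eigen ij by (intro cinner_cong refl) (subst matvec_lincomb, simp)
    hence "qform d A x = cnj \<alpha> * \<alpha> * complex_of_real (t i) + cnj \<beta> * \<beta> * complex_of_real (t j)"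
      unfolding x_def using orthonormalD[OF orthonormal] ij
      by (simp add: cinner_add_left cinner_add_right cinner_scale_left cinner_scale_right algebra_simps)
    hence "Re (qform d A x) = (cmod \<alpha>)^2 * t i + (cmod \<beta>)^2 * t j" by (simp add: cnj_mult_self)
    moreover have "\<alpha> \<noteq> 0" unfolding \<alpha>_def using False by simp
    hence "(cmod \<alpha>)^2 * t i > 0" using pos by simp
    moreover have "(cmod \<beta>)^2 * t j \<ge> 0" using \<open>\<not> t j \<le> 0\<close> by simp
    ultimately show False by simp
  qed
qed

lemma sum_abs_eq_twice_max:
  fixes t :: "'a \<Rightarrow> real"
  assumes "finite I" "j0 \<in> I" "sum t I = 0" "\<And>j. j \<in> I \<Longrightarrow> j \<noteq> j0 \<Longrightarrow> t j \<le> 0"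
  shows "(\<Sum>j\<in>I. \<bar>t j\<bar>) = 2 * t j0"
proof -
  have rest: "(\<Sum>j\<in>I - {j0}. t j) = - t j0" using assms(1-3) by (simp add: sum_diff1)
  have "(\<Sum>j\<in>I - {j0}. \<bar>t j\<bar>) = - (\<Sum>j\<in>I - {j0}. t j)"
    using assms(4) by (auto simp: sum_negf[symmetric] intro!: sum.cong)
  moreover have "t j0 \<ge> 0" using rest assms(4) sum_nonpos[of "I - {j0}" t] by force
  ultimately show ?thesis using assms(1,2) rest by (simp add: sum.remove)
qed

text \<open>Trace zero and a single positive eigenvalue make the trace norm twice the largest eigenvalue.\<close>

lemma half_trace_norm_eq_max_qform:
  assumes D: "D \<in> carrier_mat d d" and h: "hermitian d (\<lambda>a b. D $$ (a,b))" and d0: "0 < d"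
    and tr: "(\<Sum>a<d. D $$ (a,a)) = 0"
    and nonpos: "\<And>x. cinner d x \<psi> = 0 \<Longrightarrow> Re (qform d (\<lambda>a b. D $$ (a,b)) x) \<le> 0"
  shows "\<exists>x0. sqnorm d x0 = 1 \<and> trace_norm D / 2 = Re (qform d (\<lambda>a b. D $$ (a,b)) x0)
           \<and> (\<forall>x. sqnorm d x = 1 \<longrightarrow> Re (qform d (\<lambda>a b. D $$ (a,b)) x) \<le> trace_norm D / 2)"
proof -
  obtain e t where es: "eigenbasis d (\<lambda>a b. D $$ (a,b)) e t"
    using hermitian_eigenbasisE[OF h] .
  interpret eigenbasis d "\<lambda>a b. D $$ (a,b)" e t by (rule es)
  obtain j0 where j0: "j0 < d" "\<And>j. j < d \<Longrightarrow> t j \<le> t j0"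
  proof -
    have "Max (t ` {..<d}) \<in> t ` {..<d}" using d0 by (intro Max_in) auto
    then obtain j0 where "j0 < d" "t j0 = Max (t ` {..<d})" by auto
    thus ?thesis using that[of j0] by auto
  qed
  have "t j \<le> 0" if "j < d" "j \<noteq> j0" for j
    using positive_eigenvalue_unique[where i=j0 and j=j, OF nonpos] j0 that by fastforce
  moreover have "(\<Sum>j<d. t j) = 0" using trace_eq tr by (metis of_real_eq_0_iff)
  ultimately have tn: "trace_norm D / 2 = t j0"
    using trace_norm_hermitian[OF D h es] sum_abs_eq_twice_max[of "{..<d}" j0 t] j0(1) by simp
  show ?thesis
  proof (intro exI conjI allI impI)
    show "sqnorm d (e j0) = 1" by (rule sqnorm_eigenvector[OF j0(1)])
    show "trace_norm D / 2 = Re (qform d (\<lambda>a b. D $$ (a,b)) (e j0))"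
      using tn qform_eigenvector[OF j0(1)] by simp
    fix x assume "sqnorm d x = 1"
    thus "Re (qform d (\<lambda>a b. D $$ (a,b)) x) \<le> trace_norm D / 2"
      using qform_le_max_eigenvalue[of "t j0" x] j0 tn by simp
  qed
qed

section \<open>Sums of the \<open>k\<close> largest squares\<close>

definition topk_sq :: "nat \<Rightarrow> nat \<Rightarrow> (nat \<Rightarrow> real) \<Rightarrow> real" where
  "topk_sq d k y = Max ((\<lambda>S. \<Sum>i\<in>S. (y i)^2) ` {S. S \<subseteq> {..<d} \<and> card S \<le> k})"

lemma finite_small_subsets: "finite {S. S \<subseteq> {..<d::nat} \<and> card S \<le> k}"
  by (rule finite_subset[of _ "Pow {..<d}"]) auto

lemma topk_sq_ge: "S \<subseteq> {..<d} \<Longrightarrow> card S \<le> k \<Longrightarrow> (\<Sum>i\<in>S. (y i)^2) \<le> topk_sq d k y"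
  unfolding topk_sq_def by (rule Max_ge) (use finite_small_subsets in auto)

lemma topk_sq_attained: obtains S where "S \<subseteq> {..<d}" "card S \<le> k" "topk_sq d k y = (\<Sum>i\<in>S. (y i)^2)"
proof -
  have "topk_sq d k y \<in> (\<lambda>S. \<Sum>i\<in>S. (y i)^2) ` {S. S \<subseteq> {..<d} \<and> card S \<le> k}"
    unfolding topk_sq_def by (rule Max_in) (use finite_small_subsets in auto)
  thus ?thesis using that by auto
qed

lemma topk_sq_nonneg: "topk_sq d k y \<ge> 0"
  using topk_sq_ge[of "{}" d k y] by simp

lemma topk_sq_le_sum: "topk_sq d k y \<le> (\<Sum>i<d. (y i)^2)"
proof -
  obtain S where "S \<subseteq> {..<d}" "topk_sq d k y = (\<Sum>i\<in>S. (y i)^2)" by (rule topk_sq_attained)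
  thus ?thesis by (auto intro: sum_mono2)
qed

lemma topk_sq_cong: "(\<And>i. i < d \<Longrightarrow> (y i)^2 = (z i)^2) \<Longrightarrow> topk_sq d k y = topk_sq d k z"
proof -
  assume "\<And>i. i < d \<Longrightarrow> (y i)^2 = (z i)^2"
  hence "(\<lambda>S. \<Sum>i\<in>S. (y i)^2) ` {S. S \<subseteq> {..<d} \<and> card S \<le> k}
       = (\<lambda>S. \<Sum>i\<in>S. (z i)^2) ` {S. S \<subseteq> {..<d} \<and> card S \<le> k}"
    by (intro image_cong refl sum.cong) auto
  thus ?thesis unfolding topk_sq_def by simp
qed

lemma topk_sq_le_add: "topk_sq d k y \<le> topk_sq d k z + (\<Sum>i<d. \<bar>(y i)^2 - (z i)^2\<bar>)"
proof -
  obtain S where S: "S \<subseteq> {..<d}" "card S \<le> k" "topk_sq d k y = (\<Sum>i\<in>S. (y i)^2)"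
    by (rule topk_sq_attained)
  have "(\<Sum>i\<in>S. (y i)^2) = (\<Sum>i\<in>S. (z i)^2) + (\<Sum>i\<in>S. (y i)^2 - (z i)^2)" by (simp add: sum_subtractf)
  also have "(\<Sum>i\<in>S. (y i)^2 - (z i)^2) \<le> (\<Sum>i<d. \<bar>(y i)^2 - (z i)^2\<bar>)"
    using S by (intro order_trans[OF sum_mono sum_mono2]) auto
  finally show ?thesis using S topk_sq_ge[OF S(1,2), of z] by linarith
qed

lemma tendsto_topk_sq:
  assumes "\<forall>i<d. (\<lambda>j. f j i) \<longlonglongrightarrow> g i"
  shows "(\<lambda>j. topk_sq d k (f j)) \<longlonglongrightarrow> topk_sq d k g"
proof -
  define E where "E j = (\<Sum>i<d. \<bar>(f j i)^2 - (g i)^2\<bar>)" for j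
  have "(\<lambda>j. E j) \<longlonglongrightarrow> (\<Sum>i<d. \<bar>(g i)^2 - (g i)^2\<bar>)"
    unfolding E_def using assms by (intro tendsto_sum tendsto_rabs tendsto_diff tendsto_power tendsto_const) auto
  hence E0: "(\<lambda>j. E j) \<longlonglongrightarrow> 0" by simp
  have "norm (topk_sq d k (f j) - topk_sq d k g) \<le> norm (E j) * 1" for j
  proof -
    have "topk_sq d k g \<le> topk_sq d k (f j) + (\<Sum>i<d. \<bar>(g i)^2 - (f j i)^2\<bar>)" by (rule topk_sq_le_add)
    moreover have "(\<Sum>i<d. \<bar>(g i)^2 - (f j i)^2\<bar>) = E j" unfolding E_def by (intro sum.cong refl) auto
    moreover have "E j \<ge> 0" unfolding E_def by (intro sum_nonneg) auto
    ultimately show ?thesis using topk_sq_le_add[of d k "f j" g] unfolding E_def by simp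
  qed
  hence "(\<lambda>j. topk_sq d k (f j) - topk_sq d k g) \<longlonglongrightarrow> 0"
    by (intro tendsto_0_le[OF E0, of _ 1]) auto
  thus ?thesis by (rule LIM_zero_cancel)
qed

lemma topk_sq_scale: "topk_sq d k (\<lambda>i. c * y i) = c^2 * topk_sq d k y"
proof (rule antisym)
  obtain S where S: "S \<subseteq> {..<d}" "card S \<le> k" "topk_sq d k (\<lambda>i. c * y i) = (\<Sum>i\<in>S. (c * y i)^2)"
    by (rule topk_sq_attained)
  have "(\<Sum>i\<in>S. (c * y i)^2) = c^2 * (\<Sum>i\<in>S. (y i)^2)" by (simp add: sum_distrib_left power_mult_distrib)
  also have "\<dots> \<le> c^2 * topk_sq d k y" using topk_sq_ge[OF S(1,2)] by (intro mult_left_mono) auto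
  finally show "topk_sq d k (\<lambda>i. c * y i) \<le> c^2 * topk_sq d k y" using S by simp
next
  obtain S where S: "S \<subseteq> {..<d}" "card S \<le> k" "topk_sq d k y = (\<Sum>i\<in>S. (y i)^2)"
    by (rule topk_sq_attained)
  have "c^2 * topk_sq d k y = (\<Sum>i\<in>S. (c * y i)^2)" using S by (simp add: sum_distrib_left power_mult_distrib)
  also have "\<dots> \<le> topk_sq d k (\<lambda>i. c * y i)" by (rule topk_sq_ge[OF S(1,2)])
  finally show "c^2 * topk_sq d k y \<le> topk_sq d k (\<lambda>i. c * y i)" .
qed

lemma topk_sq_le_permute:
  assumes bij: "bij_betw \<pi> {..<d} {..<d}"
  shows "topk_sq d k (\<lambda>i. y (\<pi> i)) \<le> topk_sq d k y"
proof -
  obtain S where S: "S \<subseteq> {..<d}" "card S \<le> k" "topk_sq d k (\<lambda>i. y (\<pi> i)) = (\<Sum>i\<in>S. (y (\<pi> i))^2)"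
    by (rule topk_sq_attained)
  have inj: "inj_on \<pi> S" using bij S(1) by (meson bij_betw_def inj_on_subset)
  have "(\<Sum>i\<in>S. (y (\<pi> i))^2) = (\<Sum>j\<in>\<pi> ` S. (y j)^2)" by (simp add: sum.reindex[OF inj])
  also have "\<dots> \<le> topk_sq d k y"
    using S bij inj by (intro topk_sq_ge) (auto simp: card_image bij_betw_def)
  finally show ?thesis using S by simp
qed

lemma topk_sq_permute:
  assumes bij: "bij_betw \<pi> {..<d} {..<d}"
  shows "topk_sq d k (\<lambda>i. y (\<pi> i)) = topk_sq d k y"
proof (rule antisym[OF topk_sq_le_permute[OF bij]])
  define \<rho> where "\<rho> = the_inv_into {..<d} \<pi>"
  have bij': "bij_betw \<rho> {..<d} {..<d}" unfolding \<rho>_def by (rule bij_betw_the_inv_into[OF bij])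
  have "\<pi> (\<rho> i) = i" if "i < d" for i
    unfolding \<rho>_def using bij that by (auto intro: f_the_inv_into_f_bij_betw)
  hence "topk_sq d k y = topk_sq d k (\<lambda>i. y (\<pi> (\<rho> i)))" by (intro topk_sq_cong) auto
  also have "\<dots> \<le> topk_sq d k (\<lambda>i. y (\<pi> i))" by (rule topk_sq_le_permute[OF bij'])
  finally show "topk_sq d k y \<le> topk_sq d k (\<lambda>i. y (\<pi> i))" .
qed

lemma sum_le_sum_initial_segment:
  fixes w :: "nat \<Rightarrow> real"
  assumes anti: "\<And>i j. i \<le> j \<Longrightarrow> j < d \<Longrightarrow> w j \<le> w i" and nn: "\<And>i. w i \<ge> 0"
    and T: "T \<subseteq> {..<d}" "card T \<le> k" and kd: "k \<le> d"
  shows "(\<Sum>i\<in>T. w i) \<le> (\<Sum>i<k. w i)"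
proof (cases "k = 0")
  case True
  hence "T = {}" using T finite_subset[OF T(1)] by auto
  thus ?thesis using True by simp
next
  case False
  define c where "c = w (k - 1)"
  define A where "A = T - {..<k}"
  define B where "B = {..<k} - T"
  have finT: "finite T" using T(1) finite_subset by blast
  have sT: "(\<Sum>i\<in>T. w i) = (\<Sum>i\<in>T \<inter> {..<k}. w i) + (\<Sum>i\<in>A. w i)"
    unfolding A_def using finT by (metis Diff_eq sum.Int_Diff)
  have sK: "(\<Sum>i<k. w i) = (\<Sum>i\<in>T \<inter> {..<k}. w i) + (\<Sum>i\<in>B. w i)"
    unfolding B_def by (metis Diff_eq finite_lessThan inf.commute sum.Int_Diff)
  have cT: "card T = card (T \<inter> {..<k}) + card A"
    unfolding A_def using finT by (metis Diff_eq card_Int_Diff)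
  have cK: "k = card (T \<inter> {..<k}) + card B"
    unfolding B_def by (metis Diff_eq card_Int_Diff card_lessThan finite_lessThan inf.commute)
  have cAB: "card A \<le> card B" using cT cK T(2) by linarith
  have "(\<Sum>i\<in>A. w i) \<le> (\<Sum>i\<in>A. c)"
    using T(1) unfolding A_def c_def by (intro sum_mono anti) auto
  also have "\<dots> \<le> (\<Sum>i\<in>B. c)"
    using cAB nn[of "k - 1"] unfolding c_def by (simp add: mult_right_mono)
  also have "\<dots> \<le> (\<Sum>i\<in>B. w i)"
    using kd False unfolding B_def c_def by (intro sum_mono anti) auto
  finally show ?thesis using sT sK by linarith
qed

lemma topk_sq_sorted:
  assumes anti: "\<And>i j. i \<le> j \<Longrightarrow> j < d \<Longrightarrow> \<bar>y j\<bar> \<le> \<bar>y i\<bar>" and kd: "k \<le> d"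
  shows "topk_sq d k y = (\<Sum>i<k. (y i)^2)"
proof (rule antisym)
  obtain S where S: "S \<subseteq> {..<d}" "card S \<le> k" "topk_sq d k y = (\<Sum>i\<in>S. (y i)^2)"
    by (rule topk_sq_attained)
  have "(\<Sum>i\<in>S. (y i)^2) \<le> (\<Sum>i<k. (y i)^2)"
  proof (rule sum_le_sum_initial_segment[OF _ _ S(1,2) kd])
    fix i j :: nat assume "i \<le> j" "j < d"
    hence "\<bar>y j\<bar> \<le> \<bar>y i\<bar>" by (rule anti)
    thus "(y j)^2 \<le> (y i)^2" by (metis abs_ge_zero power2_abs power_mono)
  qed auto
  thus "topk_sq d k y \<le> (\<Sum>i<k. (y i)^2)" using S by simp
next
  show "(\<Sum>i<k. (y i)^2) \<le> topk_sq d k y" using kd by (intro topk_sq_ge) auto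
qed

lemma rev_sort_nth_antimono:
  fixes xs :: "real list"
  assumes "i \<le> j" "j < length xs"
  shows "rev (sort xs) ! j \<le> rev (sort xs) ! i"
proof -
  have "rev (sort xs) ! j = sort xs ! (length xs - Suc j)" using assms by (simp add: rev_nth)
  also have "\<dots> \<le> sort xs ! (length xs - Suc i)" using assms by (intro sorted_nth_mono) auto
  also have "\<dots> = rev (sort xs) ! i" using assms by (simp add: rev_nth)
  finally show ?thesis .
qed

lemma mset_eq_bij_nth:
  assumes "mset xs = mset ys" "length xs = d"
  obtains f where "bij_betw f {..<d} {..<d}" "\<And>i. i < d \<Longrightarrow> xs ! i = ys ! f i"
proof -
  have len: "length ys = d" using mset_eq_length[OF assms(1)] assms(2) by simp
  obtain f where f: "bij_betw f {..<length xs} {..<length ys}" "\<forall>i<length xs. xs ! i = ys ! f i"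
    using permutation_Ex_bij[OF assms(1)] by blast
  show ?thesis by (rule that[of f]) (use f len assms(2) in auto)
qed

lemma topk_norm_sq:
  assumes m: "m \<in> carrier_vec d" and kd: "k \<le> d"
  shows "(topk_norm k m)^2 = topk_sq d k (\<lambda>i. m $ i)"
proof -
  define s where "s = rev (sort (map abs (list_of_vec m)))"
  have len: "length s = d" using m unfolding s_def by simp
  have "mset s = mset (map abs (list_of_vec m))" unfolding s_def by simp
  then obtain f where f: "bij_betw f {..<d} {..<d}" "\<And>i. i < d \<Longrightarrow> s ! i = map abs (list_of_vec m) ! f i"
    using mset_eq_bij_nth[OF _ len] by blast
  have fi: "s ! i = \<bar>m $ f i\<bar>" if "i < d" for i
    using f that m bij_betwE[OF f(1)] by auto
  have "topk_sq d k (\<lambda>i. m $ i) = topk_sq d k (\<lambda>i. m $ f i)" by (rule topk_sq_permute[OF f(1), symmetric])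
  also have "\<dots> = topk_sq d k (\<lambda>i. s ! i)" using fi by (intro topk_sq_cong) simp
  also have "\<dots> = (\<Sum>i<k. (s ! i)^2)"
  proof (rule topk_sq_sorted[OF _ kd])
    fix i j assume "i \<le> j" "j < d"
    hence "s ! j \<le> s ! i" unfolding s_def using len[unfolded s_def] by (intro rev_sort_nth_antimono) auto
    moreover have "s ! j \<ge> 0" using fi \<open>j < d\<close> by simp
    ultimately show "\<bar>s ! j\<bar> \<le> \<bar>s ! i\<bar>" by simp
  qed
  finally show ?thesis unfolding topk_norm_def s_def by (simp add: sum_nonneg)
qed

lemma vdown_length: "v \<in> carrier_vec d \<Longrightarrow> length (vdown v) = d"
  unfolding vdown_def by simp

lemma vdown_permutation:
  assumes v: "v \<in> carrier_vec d"
  obtains g where "bij_betw g {..<d} {..<d}" "\<And>i. i < d \<Longrightarrow> vdown v ! i = cmod (v $ g i)"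
proof -
  have "mset (vdown v) = mset (map cmod (list_of_vec v))" unfolding vdown_def by simp
  then obtain g where g: "bij_betw g {..<d} {..<d}" "\<And>i. i < d \<Longrightarrow> vdown v ! i = map cmod (list_of_vec v) ! g i"
    using mset_eq_bij_nth[OF _ vdown_length[OF v]] by blast
  have "vdown v ! i = cmod (v $ g i)" if "i < d" for i
    using g(2)[OF that] bij_betwE[OF g(1)] that v by auto
  thus ?thesis using that g(1) by blast
qed

lemma vdown_permutation_inverse:
  assumes v: "v \<in> carrier_vec d"
  obtains h where "bij_betw h {..<d} {..<d}" "\<And>i. i < d \<Longrightarrow> cmod (v $ i) = vdown v ! h i"
proof -
  have "mset (map cmod (list_of_vec v)) = mset (vdown v)" unfolding vdown_def by simp
  moreover have "length (map cmod (list_of_vec v)) = d" using v by simp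
  ultimately obtain h where "bij_betw h {..<d} {..<d}" "\<And>i. i < d \<Longrightarrow> map cmod (list_of_vec v) ! i = vdown v ! h i"
    using mset_eq_bij_nth by blast
  thus ?thesis using that v by simp
qed

lemma vdown_sum_squares:
  assumes v: "v \<in> carrier_vec d" and vu: "unit_cvec v"
  shows "(\<Sum>i<d. (vdown v ! i)^2) = 1"
proof -
  obtain g where g: "bij_betw g {..<d} {..<d}" "\<And>i. i < d \<Longrightarrow> vdown v ! i = cmod (v $ g i)"
    using vdown_permutation[OF v] by blast
  have "(\<Sum>i<d. (vdown v ! i)^2) = (\<Sum>i<d. (cmod (v $ g i))^2)" using g(2) by simp
  also have "\<dots> = (\<Sum>i<d. (cmod (v $ i))^2)" using sum.reindex_bij_betw[OF g(1), of "\<lambda>i. (cmod (v $ i))^2"] by simp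
  finally show ?thesis using vu v unfolding unit_cvec_def by simp
qed

section \<open>Pure states and sparse mixtures\<close>

definition pure_state :: "complex vec \<Rightarrow> nat \<Rightarrow> nat \<Rightarrow> complex" where
  "pure_state v = (\<lambda>a b. v $ a * cnj (v $ b))"

definition mixture :: "nat \<Rightarrow> (nat \<Rightarrow> real) \<Rightarrow> (nat \<Rightarrow> complex vec) \<Rightarrow> nat \<Rightarrow> nat \<Rightarrow> complex" where
  "mixture n p us = (\<lambda>a b. \<Sum>i<n. complex_of_real (p i) * (us i $ a * cnj (us i $ b)))"

definition sparse_unit :: "nat \<Rightarrow> nat \<Rightarrow> complex vec \<Rightarrow> bool" where
  "sparse_unit d k u \<longleftrightarrow> u \<in> carrier_vec d \<and> unit_cvec u \<and> sparse k u"

locale sparse_mixture =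
  fixes d k n :: nat and p :: "nat \<Rightarrow> real" and us :: "nat \<Rightarrow> complex vec"
  assumes weights_nonneg: "\<And>i. i < n \<Longrightarrow> p i \<ge> 0" and weights_sum: "(\<Sum>i<n. p i) = 1"
    and sparse_units: "\<And>i. i < n \<Longrightarrow> sparse_unit d k (us i)"

lemma Ik_iff_sparse_mixture:
  "\<sigma> \<in> Ik d k \<longleftrightarrow> (\<exists>n p us. sparse_mixture d k n p us \<and> \<sigma> = mat d d (\<lambda>(a,b). mixture n p us a b))"
  unfolding Ik_def mixture_def sparse_mixture_def sparse_unit_def by blast

lemma sparse_mixture_single: "sparse_unit d k u \<Longrightarrow> sparse_mixture d k 1 (\<lambda>_. 1) (\<lambda>_. u)"
  by unfold_locales auto

lemma mixture_single: "mixture 1 (\<lambda>_. 1) (\<lambda>_. u) = (\<lambda>a b. u $ a * cnj (u $ b))"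
  unfolding mixture_def by simp

lemma sparse_unit_first_basis_vector:
  assumes "0 < k" "k \<le> d"
  shows "sparse_unit d k (vec d (\<lambda>i. if i = 0 then 1 else 0))"
proof -
  have d0: "0 < d" using assms by simp
  have "{i. i < d \<and> vec d (\<lambda>i. if i = 0 then 1 else 0) $ i \<noteq> (0::complex)} = {0}"
    using d0 by (auto split: if_splits)
  hence "sparse k (vec d (\<lambda>i. if i = 0 then 1 else (0::complex)))" unfolding sparse_def using assms by simp
  moreover have "(\<Sum>i<d. (cmod (vec d (\<lambda>i. if i = 0 then 1 else (0::complex)) $ i))^2)
      = (\<Sum>i<d. if i = 0 then 1 else 0)"
    by (intro sum.cong refl) auto
  moreover have "(\<Sum>i<d. if i = 0 then 1 else 0) = (1::real)" using d0 by simp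
  ultimately show ?thesis unfolding sparse_unit_def unit_cvec_def by simp
qed

lemma unit_cvec_sqnorm: "u \<in> carrier_vec d \<Longrightarrow> unit_cvec u \<Longrightarrow> sqnorm d (\<lambda>a. u $ a) = 1"
  unfolding unit_cvec_def sqnorm_def by simp

lemma sparse_unit_inner_le_topk_sq:
  assumes "sparse_unit d k u"
  shows "(cmod (cinner d x (\<lambda>a. u $ a)))^2 \<le> topk_sq d k (\<lambda>a. cmod (x a))"
proof -
  define S where "S = {i. i < dim_vec u \<and> u $ i \<noteq> 0}"
  have u: "u \<in> carrier_vec d" and S: "S \<subseteq> {..<d}" "card S \<le> k"
    using assms unfolding S_def sparse_unit_def sparse_def by auto
  have "cinner d x (\<lambda>a. u $ a) = (\<Sum>a\<in>S. cnj (x a) * u $ a)"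
    unfolding cinner_def using S(1) u by (intro sum.mono_neutral_right) (auto simp: S_def)
  hence "(cmod (cinner d x (\<lambda>a. u $ a)))^2 \<le> (\<Sum>a\<in>S. (cmod (x a))^2) * (\<Sum>a\<in>S. (cmod (u $ a))^2)"
    using cauchy_schwarz_complex by simp
  also have "(\<Sum>a\<in>S. (cmod (u $ a))^2) = (\<Sum>a<d. (cmod (u $ a))^2)"
    using S(1) u by (intro sum.mono_neutral_left) (auto simp: S_def)
  also have "\<dots> = 1" using assms u unfolding sparse_unit_def unit_cvec_def by simp
  finally show ?thesis using topk_sq_ge[OF S, of "\<lambda>a. cmod (x a)"] by simp
qed

lemma hermitian_pure_state: "hermitian d (pure_state v)"
  unfolding hermitian_def pure_state_def by (simp add: mult.commute)

lemma trace_pure_state: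
  assumes "v \<in> carrier_vec d" "unit_cvec v"
  shows "(\<Sum>a<d. pure_state v a a) = 1"
proof -
  have "sqnorm d (\<lambda>a. v $ a) = 1" by (rule unit_cvec_sqnorm[OF assms])
  thus ?thesis using cinner_self[of d "\<lambda>a. v $ a"] unfolding cinner_def pure_state_def by (simp add: mult.commute)
qed

lemma qform_pure_state: "qform d (pure_state v) x = complex_of_real ((cmod (cinner d x (\<lambda>a. v $ a)))^2)"
  unfolding pure_state_def using qform_rank1[of d "\<lambda>a. v $ a"] by simp

context sparse_mixture
begin

lemma qform_mixture: "qform d (mixture n p us) x = complex_of_real (\<Sum>i<n. p i * (cmod (cinner d x (\<lambda>a. us i $ a)))^2)"
  unfolding mixture_def qform_sum by (simp add: qform_rank1)

lemma qform_mixture_nonneg: "0 \<le> Re (qform d (mixture n p us) x)"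
  unfolding qform_mixture using weights_nonneg by (auto intro: sum_nonneg)

lemma qform_mixture_le_topk_sq: "Re (qform d (mixture n p us) x) \<le> topk_sq d k (\<lambda>a. cmod (x a))"
proof -
  have "Re (qform d (mixture n p us) x) \<le> (\<Sum>i<n. p i * topk_sq d k (\<lambda>a. cmod (x a)))"
    unfolding qform_mixture using weights_nonneg sparse_units sparse_unit_inner_le_topk_sq
    by (auto intro!: sum_mono mult_left_mono)
  also have "\<dots> = topk_sq d k (\<lambda>a. cmod (x a))" using weights_sum by (simp flip: sum_distrib_right)
  finally show ?thesis .
qed

lemma trace_mixture: "(\<Sum>a<d. mixture n p us a a) = 1"
proof -
  have "(\<Sum>a<d. mixture n p us a a) = (\<Sum>i<n. complex_of_real (p i) * (\<Sum>a<d. us i $ a * cnj (us i $ a)))"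
    unfolding mixture_def by (simp add: sum.swap[of _ "{..<d}"] sum_distrib_left)
  also have "\<dots> = (\<Sum>i<n. complex_of_real (p i))"
  proof (intro sum.cong refl)
    fix i assume "i \<in> {..<n}"
    hence "sqnorm d (\<lambda>a. us i $ a) = 1" using sparse_units unit_cvec_sqnorm unfolding sparse_unit_def by blast
    hence "(\<Sum>a<d. us i $ a * cnj (us i $ a)) = 1" using cinner_self[of d "\<lambda>a. us i $ a"]
      unfolding cinner_def by (simp add: mult.commute)
    thus "complex_of_real (p i) * (\<Sum>a<d. us i $ a * cnj (us i $ a)) = complex_of_real (p i)" by simp
  qed
  finally show ?thesis using weights_sum by (simp flip: of_real_sum)
qed

lemma hermitian_mixture: "hermitian d (mixture n p us)"
  unfolding hermitian_def mixture_def by (simp add: mult.commute)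

end

lemma half_trace_norm_state_diff:
  assumes v: "v \<in> carrier_vec d" and vu: "unit_cvec v" and d0: "0 < d"
    and sm: "sparse_mixture d k n p us" and \<sigma>: "\<sigma> = mat d d (\<lambda>(a,b). mixture n p us a b)"
  defines "D \<equiv> \<lambda>a b. pure_state v a b - mixture n p us a b"
  shows "\<exists>x0. sqnorm d x0 = 1 \<and> trace_norm (outer v - \<sigma>) / 2 = Re (qform d D x0)
           \<and> (\<forall>x. sqnorm d x = 1 \<longrightarrow> Re (qform d D x) \<le> trace_norm (outer v - \<sigma>) / 2)"
proof -
  interpret sparse_mixture d k n p us by (rule sm)
  have dv: "dim_vec v = d" using v by simp
  have M: "outer v - \<sigma> \<in> carrier_mat d d" unfolding \<sigma> outer_def dv by auto
  have entries: "(outer v - \<sigma>) $$ (a,b) = D a b" if "a < d" "b < d" for a b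
    unfolding D_def \<sigma> outer_def pure_state_def dv using that by simp
  have qf: "qform d (\<lambda>a b. (outer v - \<sigma>) $$ (a,b)) x = qform d D x" for x
    using entries by (intro qform_mat_cong) auto
  have h: "hermitian d (\<lambda>a b. (outer v - \<sigma>) $$ (a,b))"
    using entries unfolding D_def by (rule hermitian_cong[OF _ hermitian_diff[OF hermitian_pure_state hermitian_mixture]])
  have tr: "(\<Sum>a<d. (outer v - \<sigma>) $$ (a,a)) = 0"
    using entries trace_pure_state[OF v vu] trace_mixture by (simp add: D_def sum_subtractf)
  have "Re (qform d (\<lambda>a b. (outer v - \<sigma>) $$ (a,b)) x) \<le> 0" if "cinner d x (\<lambda>a. v $ a) = 0" for x
    unfolding qf D_def qform_diff using that qform_mixture_nonneg[of x] by (simp add: qform_pure_state)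
  from half_trace_norm_eq_max_qform[OF M h d0 tr this] show ?thesis unfolding qf .
qed

definition phase :: "complex \<Rightarrow> complex" where
  "phase z = (if z = 0 then 1 else z / complex_of_real (cmod z))"

lemma cnj_phase_mult: "cnj (phase z) * z = complex_of_real (cmod z)"
proof (cases "z = 0")
  case False
  have "cnj z * z / complex_of_real (cmod z) = complex_of_real ((cmod z)^2) / complex_of_real (cmod z)"
    by (simp add: cnj_mult_self)
  also have "\<dots> = complex_of_real (cmod z)" using False by (simp add: power2_eq_square)
  finally show ?thesis using False unfolding phase_def by simp
qed (simp add: phase_def)

lemma norm_phase: "cmod (phase z) = 1"
  unfolding phase_def by (simp add: norm_divide)

section \<open>The objective and the lower bound\<close>

definition objective :: "nat \<Rightarrow> nat \<Rightarrow> complex vec \<Rightarrow> (nat \<Rightarrow> real) \<Rightarrow> real" where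
  "objective d k v m = (\<Sum>i<d. m i * vdown v ! i)^2 - topk_sq d k m"

lemma objective_realised:
  assumes v: "v \<in> carrier_vec d" and m: "(\<Sum>i<d. (m i)^2) = 1"
  obtains x where "sqnorm d x = 1" "cinner d x (\<lambda>a. v $ a) = complex_of_real (\<Sum>i<d. m i * vdown v ! i)"
    "topk_sq d k (\<lambda>a. cmod (x a)) = topk_sq d k m"
proof -
  obtain h where h: "bij_betw h {..<d} {..<d}" "\<And>i. i < d \<Longrightarrow> cmod (v $ i) = vdown v ! h i"
    using vdown_permutation_inverse[OF v] by blast
  define x where "x = (\<lambda>a. complex_of_real (m (h a)) * phase (v $ a))"
  have "cinner d x (\<lambda>a. v $ a) = (\<Sum>a<d. complex_of_real (m (h a) * vdown v ! h a))"
    unfolding cinner_def x_def using h(2) by (intro sum.cong refl) (simp add: mult.assoc cnj_phase_mult)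
  also have "\<dots> = complex_of_real (\<Sum>i<d. m i * vdown v ! i)"
    unfolding of_real_sum[symmetric] using sum.reindex_bij_betw[OF h(1), of "\<lambda>i. m i * vdown v ! i"] by simp
  finally have "cinner d x (\<lambda>a. v $ a) = complex_of_real (\<Sum>i<d. m i * vdown v ! i)" .
  moreover have "sqnorm d x = 1"
    unfolding sqnorm_def x_def using sum.reindex_bij_betw[OF h(1), of "\<lambda>i. (m i)^2"] m
    by (simp add: norm_mult norm_phase)
  moreover have "topk_sq d k (\<lambda>a. cmod (x a)) = topk_sq d k (\<lambda>a. m (h a))"
    unfolding x_def by (intro topk_sq_cong) (simp add: norm_mult norm_phase)
  hence "topk_sq d k (\<lambda>a. cmod (x a)) = topk_sq d k m" using topk_sq_permute[OF h(1)] by simp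
  ultimately show ?thesis using that by blast
qed

lemma objective_le_half_trace_norm:
  assumes v: "v \<in> carrier_vec d" and vu: "unit_cvec v" and d0: "0 < d"
    and \<sigma>: "\<sigma> \<in> Ik d k" and m: "(\<Sum>i<d. (m i)^2) = 1"
  shows "objective d k v m \<le> trace_norm (outer v - \<sigma>) / 2"
proof -
  obtain n p us where sm: "sparse_mixture d k n p us" and \<sigma>_eq: "\<sigma> = mat d d (\<lambda>(a,b). mixture n p us a b)"
    using \<sigma> Ik_iff_sparse_mixture by blast
  interpret sparse_mixture d k n p us by (rule sm)
  obtain x where x: "sqnorm d x = 1" "cinner d x (\<lambda>a. v $ a) = complex_of_real (\<Sum>i<d. m i * vdown v ! i)"
    "topk_sq d k (\<lambda>a. cmod (x a)) = topk_sq d k m"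
    by (rule objective_realised[OF v m])
  have "Re (qform d (pure_state v) x) = (\<Sum>i<d. m i * vdown v ! i)^2"
    unfolding qform_pure_state x(2) norm_of_real by (simp only: Re_complex_of_real power2_abs)
  hence "objective d k v m \<le> Re (qform d (pure_state v) x) - Re (qform d (mixture n p us) x)"
    unfolding objective_def using qform_mixture_le_topk_sq[of x] x(3) by simp
  also have "\<dots> \<le> trace_norm (outer v - \<sigma>) / 2"
    using half_trace_norm_state_diff[OF v vu d0 sm \<sigma>_eq] x(1) unfolding qform_diff by force
  finally show ?thesis .
qed

section \<open>Separating a convex set of matrices from zero\<close>

definition frob_inner :: "nat \<Rightarrow> (nat \<Rightarrow> nat \<Rightarrow> complex) \<Rightarrow> (nat \<Rightarrow> nat \<Rightarrow> complex) \<Rightarrow> complex" where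
  "frob_inner d Y Z = (\<Sum>a<d. \<Sum>b<d. cnj (Y a b) * Z a b)"

definition frob_sqnorm :: "nat \<Rightarrow> (nat \<Rightarrow> nat \<Rightarrow> complex) \<Rightarrow> real" where
  "frob_sqnorm d Z = (\<Sum>a<d. \<Sum>b<d. (cmod (Z a b))^2)"

definition convex_comb :: "real \<Rightarrow> (nat \<Rightarrow> nat \<Rightarrow> complex) \<Rightarrow> (nat \<Rightarrow> nat \<Rightarrow> complex) \<Rightarrow> nat \<Rightarrow> nat \<Rightarrow> complex" where
  "convex_comb s A B = (\<lambda>a b. complex_of_real (1 - s) * A a b + complex_of_real s * B a b)"

definition convex_mats :: "(nat \<Rightarrow> nat \<Rightarrow> complex) set \<Rightarrow> bool" where
  "convex_mats C \<longleftrightarrow> (\<forall>A\<in>C. \<forall>B\<in>C. \<forall>s. 0 \<le> s \<longrightarrow> s \<le> 1 \<longrightarrow> convex_comb s A B \<in> C)"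

lemma frob_sqnorm_expand:
  "frob_sqnorm d (\<lambda>a b. Z a b + complex_of_real s * V a b)
   = frob_sqnorm d Z + 2 * s * Re (frob_inner d Z V) + s^2 * frob_sqnorm d V"
proof -
  have "(cmod (z + complex_of_real s * w))^2 = (cmod z)^2 + 2 * s * Re (cnj z * w) + s^2 * (cmod w)^2" for z w
    unfolding cmod_power2 by (simp add: power2_eq_square algebra_simps)
  thus ?thesis unfolding frob_sqnorm_def frob_inner_def by (simp only: sum.distrib Re_sum sum_distrib_left)
qed

lemma frob_sqnorm_nonneg: "frob_sqnorm d Z \<ge> 0"
  unfolding frob_sqnorm_def by (intro sum_nonneg) auto

lemma entry_sq_le_frob_sqnorm: "a < d \<Longrightarrow> b < d \<Longrightarrow> (cmod (Z a b))^2 \<le> frob_sqnorm d Z"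
  unfolding frob_sqnorm_def
  by (rule order_trans[OF member_le_sum member_le_sum[of a]]) (auto intro: sum_nonneg)

lemma frob_inner_self: "Re (frob_inner d Z Z) = frob_sqnorm d Z"
  unfolding frob_inner_def frob_sqnorm_def by (simp add: cnj_mult_self)

lemma frob_inner_diff_right: "frob_inner d Z (\<lambda>a b. A a b - B a b) = frob_inner d Z A - frob_inner d Z B"
  unfolding frob_inner_def by (simp add: algebra_simps sum_subtractf)

lemma tendsto_frob_sqnorm:
  assumes "\<forall>a<d. \<forall>b<d. (\<lambda>j. X j a b) \<longlonglongrightarrow> Z a b"
  shows "(\<lambda>j. frob_sqnorm d (X j)) \<longlonglongrightarrow> frob_sqnorm d Z"
  unfolding frob_sqnorm_def using assms by (intro tendsto_sum tendsto_power tendsto_norm) auto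

lemma frob_sqnorm_minimising_sequence:
  fixes d :: nat and C :: "(nat \<Rightarrow> nat \<Rightarrow> complex) set"
  assumes ne: "C \<noteq> {}"
  obtains X Z where "\<And>j. X j \<in> C" "\<forall>a<d. \<forall>b<d. (\<lambda>j. X j a b) \<longlonglongrightarrow> Z a b"
    "frob_sqnorm d Z = Inf (frob_sqnorm d ` C)"
proof -
  define \<delta> where "\<delta> = Inf (frob_sqnorm d ` C)"
  have bdd: "bdd_below (frob_sqnorm d ` C)" by (rule bdd_belowI[of _ 0]) (auto simp: frob_sqnorm_nonneg)
  have "\<exists>W\<in>C. frob_sqnorm d W < \<delta> + 1 / (real j + 1)" for j
    using cInf_lessD[of "frob_sqnorm d ` C" "\<delta> + 1 / (real j + 1)"] ne unfolding \<delta>_def by auto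
  then obtain X where X: "\<And>j. X j \<in> C" "\<And>j. frob_sqnorm d (X j) < \<delta> + 1 / (real j + 1)" by metis
  have "cmod (X j a b) \<le> \<delta> + 2" if "a < d" "b < d" for j a b
  proof -
    have "1 / (real j + 1) \<le> 1" by simp
    hence "(cmod (X j a b))^2 < \<delta> + 1"
      using entry_sq_le_frob_sqnorm[OF that, of "X j"] X(2)[of j] by linarith
    moreover have "0 \<le> (cmod (X j a b) - 1)^2" by simp
    hence "2 * cmod (X j a b) \<le> (cmod (X j a b))^2 + 1" by (simp add: power2_diff)
    hence "cmod (X j a b) \<le> 1 + (cmod (X j a b))^2" using norm_ge_zero[of "X j a b"] by linarith
    ultimately show ?thesis by simp
  qed
  then obtain r l where rl: "strict_mono r" "\<forall>i\<in>{..<d}\<times>{..<d}. (\<lambda>j. (\<lambda>(a,b). X (r j) a b) i) \<longlonglongrightarrow> l i"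
    using finite_family_convergent_subseq[of "{..<d}\<times>{..<d}" "\<lambda>j (a,b). X j a b" "\<delta> + 2"] by fastforce
  define Z where "Z = (\<lambda>a b. l (a,b))"
  have conv: "\<forall>a<d. \<forall>b<d. (\<lambda>j. X (r j) a b) \<longlonglongrightarrow> Z a b"
    using rl(2) unfolding Z_def by auto
  have lower: "\<forall>j. \<delta> \<le> frob_sqnorm d (X (r j))" unfolding \<delta>_def using bdd X(1) by (auto intro: cInf_lower)
  have upper: "\<forall>j. frob_sqnorm d (X (r j)) \<le> \<delta> + 1 / (real j + 1)"
    using X(2) inverse_subseq_le[OF rl(1)] by (smt (verit))
  have "(\<lambda>j. frob_sqnorm d (X (r j))) \<longlonglongrightarrow> \<delta>"
    by (rule tendsto_sandwich[OF always_eventually[OF lower] always_eventually[OF upper] tendsto_const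
          LIMSEQ_const_add_divide_Suc])
  hence "frob_sqnorm d Z = \<delta>" using LIMSEQ_unique[OF tendsto_frob_sqnorm[OF conv]] by simp
  thus ?thesis using that[of "\<lambda>j. X (r j)" Z] X(1) conv unfolding \<delta>_def by blast
qed

text \<open>\<open>Z\<close> is the point of minimal norm in the closure of \<open>C\<close>.\<close>

lemma convex_mats_min_norm_point:
  fixes d :: nat and C :: "(nat \<Rightarrow> nat \<Rightarrow> complex) set"
  assumes ne: "C \<noteq> {}" and cvx: "convex_mats C"
  defines "\<delta> \<equiv> Inf (frob_sqnorm d ` C)"
  obtains Z where "frob_sqnorm d Z = \<delta>"
    "\<And>W s. W \<in> C \<Longrightarrow> 0 < s \<Longrightarrow> s \<le> 1 \<Longrightarrow> \<delta> \<le> frob_sqnorm d (\<lambda>a b. Z a b + complex_of_real s * (W a b - Z a b))"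
proof -
  obtain X Z where X: "\<And>j. X j \<in> C" and conv: "\<forall>a<d. \<forall>b<d. (\<lambda>j. X j a b) \<longlonglongrightarrow> Z a b"
    and Z: "frob_sqnorm d Z = \<delta>"
    using frob_sqnorm_minimising_sequence[OF ne] unfolding \<delta>_def by blast
  have bdd: "bdd_below (frob_sqnorm d ` C)" by (rule bdd_belowI[of _ 0]) (auto simp: frob_sqnorm_nonneg)
  have "\<delta> \<le> frob_sqnorm d (\<lambda>a b. Z a b + complex_of_real s * (W a b - Z a b))"
    if W: "W \<in> C" and s: "0 < s" "s \<le> 1" for W s
  proof (rule LIMSEQ_le_const)
    show "(\<lambda>j. frob_sqnorm d (\<lambda>a b. X j a b + complex_of_real s * (W a b - X j a b)))
          \<longlonglongrightarrow> frob_sqnorm d (\<lambda>a b. Z a b + complex_of_real s * (W a b - Z a b))"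
      using conv by (intro tendsto_frob_sqnorm) (auto intro!: tendsto_intros)
    have "\<delta> \<le> frob_sqnorm d (\<lambda>a b. X j a b + complex_of_real s * (W a b - X j a b))" for j
    proof -
      have "convex_comb s (X j) W \<in> C" using cvx X W s unfolding convex_mats_def by auto
      moreover have "convex_comb s (X j) W = (\<lambda>a b. X j a b + complex_of_real s * (W a b - X j a b))"
        unfolding convex_comb_def by (intro ext) (simp add: algebra_simps)
      ultimately show ?thesis unfolding \<delta>_def using bdd by (auto intro: cInf_lower)
    qed
    thus "\<exists>N. \<forall>j\<ge>N. \<delta> \<le> frob_sqnorm d (\<lambda>a b. X j a b + complex_of_real s * (W a b - X j a b))"
      by blast
  qed
  thus ?thesis using that Z by blast
qed

lemma convex_mats_separation:
  assumes ne: "C \<noteq> {}" and cvx: "convex_mats C"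
    and gap: "\<And>W. W \<in> C \<Longrightarrow> frob_sqnorm d W \<ge> \<delta>0"
  shows "\<exists>Y. \<forall>W\<in>C. Re (frob_inner d Y W) \<ge> \<delta>0"
proof -
  define \<delta> where "\<delta> = Inf (frob_sqnorm d ` C)"
  obtain Z where Z: "frob_sqnorm d Z = \<delta>"
    and var: "\<And>W s. W \<in> C \<Longrightarrow> 0 < s \<Longrightarrow> s \<le> 1 \<Longrightarrow> \<delta> \<le> frob_sqnorm d (\<lambda>a b. Z a b + complex_of_real s * (W a b - Z a b))"
    using convex_mats_min_norm_point[OF ne cvx] unfolding \<delta>_def by blast
  have "\<delta>0 \<le> \<delta>" unfolding \<delta>_def using ne gap by (intro cInf_greatest) auto
  moreover have "\<delta> \<le> Re (frob_inner d Z W)" if W: "W \<in> C" for W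
  proof -
    have "0 \<le> Re (frob_inner d Z (\<lambda>a b. W a b - Z a b))"
    proof (rule nonneg_of_quadratic_lower_bound)
      fix s :: real assume s: "0 < s" "s \<le> 1"
      show "0 \<le> 2 * s * Re (frob_inner d Z (\<lambda>a b. W a b - Z a b)) + s^2 * frob_sqnorm d (\<lambda>a b. W a b - Z a b)"
        using var[OF W s] unfolding frob_sqnorm_expand Z by simp
    qed
    thus ?thesis unfolding frob_inner_diff_right using frob_inner_self[of d Z] Z by simp
  qed
  ultimately have "\<forall>W\<in>C. \<delta>0 \<le> Re (frob_inner d Z W)" by (blast intro: order_trans)
  thus ?thesis by blast
qed

section \<open>Positive semidefinite certificates are impossible\<close>

lemma weighted_cauchy_schwarz:
  fixes w :: "nat \<Rightarrow> real"
  assumes "\<And>j. j \<in> A \<Longrightarrow> w j \<ge> 0"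
  shows "(cmod (\<Sum>j\<in>A. cnj (b j) * (complex_of_real (w j) * c j)))^2
         \<le> (\<Sum>j\<in>A. w j * (cmod (b j))^2) * (\<Sum>j\<in>A. w j * (cmod (c j))^2)"
proof -
  have "cmod (\<Sum>j\<in>A. cnj (b j) * (complex_of_real (w j) * c j))
        \<le> (\<Sum>j\<in>A. (sqrt (w j) * cmod (b j)) * (sqrt (w j) * cmod (c j)))"
  proof (rule order_trans[OF norm_sum], intro sum_mono)
    fix j assume "j \<in> A"
    hence w0: "w j \<ge> 0" using assms by auto
    have "cmod (cnj (b j) * (complex_of_real (w j) * c j)) = (sqrt (w j) * sqrt (w j)) * (cmod (b j) * cmod (c j))"
      using w0 by (simp add: norm_mult)
    thus "cmod (cnj (b j) * (complex_of_real (w j) * c j)) \<le> (sqrt (w j) * cmod (b j)) * (sqrt (w j) * cmod (c j))"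
      by (simp only: ac_simps)
  qed
  hence "(cmod (\<Sum>j\<in>A. cnj (b j) * (complex_of_real (w j) * c j)))^2
         \<le> (\<Sum>j\<in>A. (sqrt (w j) * cmod (b j)) * (sqrt (w j) * cmod (c j)))^2"
    by (intro power_mono) auto
  also have "\<dots> \<le> (\<Sum>j\<in>A. (sqrt (w j) * cmod (b j))^2) * (\<Sum>j\<in>A. (sqrt (w j) * cmod (c j))^2)"
    by (rule cauchy_schwarz_real)
  also have "\<dots> = (\<Sum>j\<in>A. w j * (cmod (b j))^2) * (\<Sum>j\<in>A. w j * (cmod (c j))^2)"
    using assms by (simp add: power_mult_distrib)
  finally show ?thesis .
qed

context eigenbasis
begin

lemma cinner_eigenvector_matvec: "j < d \<Longrightarrow> cinner d (e j) (matvec d A x) = complex_of_real (t j) * cinner d (e j) x"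
proof -
  assume j: "j < d"
  have "cinner d (e j) (matvec d A x) = cinner d (e j) (\<lambda>a. \<Sum>i<d. complex_of_real (t i) * cinner d (e i) x * e i a)"
    using matvec_eq by (intro cinner_cong) auto
  also have "\<dots> = (\<Sum>i<d. complex_of_real (t i) * cinner d (e i) x * (if j = i then 1 else 0))"
    using orthonormalD[OF orthonormal j] by (simp add: cinner_sum_right cinner_scale_right)
  finally show ?thesis using j by (simp add: if_distrib cong: if_cong)
qed

lemma sqnorm_matvec_le_trace_qform:
  assumes nonneg: "\<And>j. j < d \<Longrightarrow> 0 \<le> t j"
  shows "sqnorm d (matvec d A \<psi>) \<le> (\<Sum>j<d. t j) * Re (qform d A \<psi>)"
proof -
  have "sqnorm d (matvec d A \<psi>) = (\<Sum>j<d. t j * (t j * (cmod (cinner d (e j) \<psi>))^2))"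
    unfolding sqnorm_eq using cinner_eigenvector_matvec
    by (intro sum.cong refl) (simp add: norm_mult power_mult_distrib power2_eq_square)
  also have "\<dots> \<le> (\<Sum>j<d. (\<Sum>i<d. t i) * (t j * (cmod (cinner d (e j) \<psi>))^2))"
    using nonneg by (intro sum_mono mult_right_mono member_le_sum) auto
  finally show ?thesis unfolding qform_eq by (simp add: sum_distrib_left)
qed

lemma cinner_matvec_cauchy_schwarz:
  assumes nonneg: "\<And>j. j < d \<Longrightarrow> 0 \<le> t j"
  shows "(cmod (cinner d u (matvec d A \<psi>)))^2 \<le> Re (qform d A u) * Re (qform d A \<psi>)"
proof -
  have "cinner d u (matvec d A \<psi>) = (\<Sum>j<d. cnj (cinner d (e j) u) * (complex_of_real (t j) * cinner d (e j) \<psi>))"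
    unfolding parseval[of u] using cinner_eigenvector_matvec by simp
  thus ?thesis unfolding qform_eq using weighted_cauchy_schwarz[of "{..<d}" t] nonneg by simp
qed

end

lemma sparse_unit_attains_topk_sq:
  assumes k0: "0 < k" and kd: "k \<le> d"
  obtains u where "sparse_unit d k u" "(cmod (cinner d (\<lambda>i. u $ i) x))^2 = topk_sq d k (\<lambda>i. cmod (x i))"
proof -
  obtain S where S: "S \<subseteq> {..<d}" "card S \<le> k" "topk_sq d k (\<lambda>i. cmod (x i)) = (\<Sum>i\<in>S. (cmod (x i))^2)"
    by (rule topk_sq_attained)
  define T where "T = topk_sq d k (\<lambda>i. cmod (x i))"
  show ?thesis
  proof (cases "T = 0")
    case True
    define u0 where "u0 = vec d (\<lambda>i. if i = 0 then 1 else (0::complex))"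
    have "(cmod (x i))^2 \<le> T" if "i < d" for i
      using topk_sq_ge[of "{i}" d k "\<lambda>i. cmod (x i)"] that k0 unfolding T_def by simp
    hence "cinner d (\<lambda>i. u0 $ i) x = 0" using True unfolding cinner_def by simp
    thus ?thesis using that[of u0] sparse_unit_first_basis_vector[OF k0 kd] True
      unfolding u0_def T_def by (simp add: cinner_commute[of d x])
  next
    case False
    hence Tpos: "T > 0" using topk_sq_nonneg[of d k] unfolding T_def by (metis less_eq_real_def)
    have SI: "{..<d} \<inter> S = S" using S(1) by auto
    define u where "u = vec d (\<lambda>i. if i \<in> S then x i / complex_of_real (sqrt T) else 0)"
    have "(\<Sum>i<d. (cmod (u $ i))^2) = (\<Sum>i<d. if i \<in> S then (cmod (x i))^2 / T else 0)"
      unfolding u_def using Tpos by (intro sum.cong refl) (auto simp: norm_divide power_divide)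
    also have "\<dots> = (\<Sum>i\<in>S. (cmod (x i))^2 / T)" using S(1) by (simp add: sum.If_cases SI)
    also have "\<dots> = 1" using S(3) Tpos unfolding T_def by (simp add: sum_divide_distrib[symmetric])
    finally have "unit_cvec u" unfolding unit_cvec_def u_def by simp
    moreover have "{i. i < dim_vec u \<and> u $ i \<noteq> 0} \<subseteq> S" unfolding u_def by (auto split: if_splits)
    hence "sparse k u"
      unfolding sparse_def using S(2) finite_subset[OF S(1)] card_mono order_trans by blast
    ultimately have u: "sparse_unit d k u" unfolding sparse_unit_def by (simp add: u_def)
    have "cinner d (\<lambda>i. u $ i) x = (\<Sum>i<d. if i \<in> S then complex_of_real ((cmod (x i))^2 / sqrt T) else 0)"
      unfolding cinner_def u_def using Tpos by (intro sum.cong refl) (auto simp: cnj_mult_self)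
    also have "\<dots> = complex_of_real ((\<Sum>i\<in>S. (cmod (x i))^2) / sqrt T)"
      using S(1) by (simp add: sum.If_cases SI sum_divide_distrib)
    finally have "(cmod (cinner d (\<lambda>i. u $ i) x))^2 = T"
      using S(3) Tpos unfolding T_def by (simp add: real_div_sqrt)
    thus ?thesis using that u unfolding T_def by blast
  qed
qed

lemma objective_ge_complex:
  assumes v: "v \<in> carrier_vec d" and N: "0 < sqnorm d x"
  obtains m where "(\<Sum>i<d. (m i)^2) = 1"
    "((cmod (cinner d x (\<lambda>a. v $ a)))^2 - topk_sq d k (\<lambda>a. cmod (x a))) / sqnorm d x \<le> objective d k v m"
proof -
  obtain g where g: "bij_betw g {..<d} {..<d}" "\<And>i. i < d \<Longrightarrow> vdown v ! i = cmod (v $ g i)"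
    using vdown_permutation[OF v] by blast
  define m where "m = (\<lambda>i. 1 / sqrt (sqnorm d x) * cmod (x (g i)))"
  have "(\<Sum>i<d. (m i)^2) = (\<Sum>i<d. (cmod (x (g i)))^2) / sqnorm d x"
    unfolding m_def using N by (simp add: power_mult_distrib power_divide sum_divide_distrib)
  hence m1: "(\<Sum>i<d. (m i)^2) = 1"
    using N sum.reindex_bij_betw[OF g(1), of "\<lambda>i. (cmod (x i))^2"] unfolding sqnorm_def by simp
  have "cmod (cinner d x (\<lambda>a. v $ a)) \<le> (\<Sum>a<d. cmod (x a) * cmod (v $ a))"
    unfolding cinner_def by (rule order_trans[OF norm_sum]) (simp add: norm_mult)
  also have "\<dots> = sqrt (sqnorm d x) * (\<Sum>i<d. m i * vdown v ! i)"
    unfolding m_def using N g(2) sum.reindex_bij_betw[OF g(1), of "\<lambda>a. cmod (x a) * cmod (v $ a)"]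
    by (simp add: sum_distrib_left)
  finally have "(cmod (cinner d x (\<lambda>a. v $ a)))^2 \<le> sqnorm d x * (\<Sum>i<d. m i * vdown v ! i)^2"
    using N power_mono[of _ _ 2] by (fastforce simp: power_mult_distrib)
  moreover have "topk_sq d k m = topk_sq d k (\<lambda>a. cmod (x a)) / sqnorm d x"
    unfolding m_def topk_sq_scale topk_sq_permute[OF g(1), of k "\<lambda>a. cmod (x a)"] using N
    by (simp add: power_divide)
  ultimately have "((cmod (cinner d x (\<lambda>a. v $ a)))^2 - topk_sq d k (\<lambda>a. cmod (x a))) / sqnorm d x
      \<le> objective d k v m"
    unfolding objective_def using N by (simp add: diff_divide_distrib divide_le_eq mult.commute)
  thus ?thesis using that m1 by blast
qed

lemma certificate_arithmetic:
  fixes a N s0 M \<delta> T :: real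
  assumes "0 < a" "0 < N" "0 \<le> M" "0 < \<delta>" "N \<le> s0 * a" "T \<le> a * (a - M * s0 - \<delta>)"
  shows "M < (a^2 - T) / N"
proof -
  have s0: "0 < s0" using assms(1,2,5) by (smt (verit) mult_nonpos_nonneg)
  have "M < M + \<delta> / s0" using assms s0 by simp
  also have "\<dots> = a * (M * s0 + \<delta>) / (s0 * a)" using assms(1) s0 by (simp add: field_simps)
  also have "\<dots> \<le> a * (M * s0 + \<delta>) / N"
    using assms s0 by (intro divide_left_mono) auto
  also have "\<dots> \<le> (a^2 - T) / N"
    using assms by (intro divide_right_mono) (auto simp: power2_eq_square algebra_simps)
  finally show ?thesis .
qed

lemma certificate_psd:
  assumes k0: "0 < k" and kd: "k \<le> d" and \<delta>: "0 \<le> \<delta>"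
    and cert: "\<And>u y t. sparse_unit d k u \<Longrightarrow> 0 \<le> t \<Longrightarrow>
      \<delta> \<le> - Re (qform d H (\<lambda>i. u $ i)) + c + t * Re (qform d H y)"
  shows "0 \<le> Re (qform d H y)"
proof (rule ccontr)
  assume neg: "\<not> 0 \<le> Re (qform d H y)"
  define u0 where "u0 = vec d (\<lambda>i. if i = 0 then 1 else (0::complex))"
  define R where "R = - Re (qform d H (\<lambda>i. u0 $ i)) + c"
  define t where "t = (\<bar>R\<bar> + 1) / - Re (qform d H y)"
  have "0 \<le> t" using neg unfolding t_def by (intro divide_nonneg_pos) auto
  hence "\<delta> \<le> R + t * Re (qform d H y)"
    using cert[OF sparse_unit_first_basis_vector[OF k0 kd], of t y] unfolding R_def u0_def by simp
  moreover have "t * Re (qform d H y) = - (\<bar>R\<bar> + 1)" using neg unfolding t_def by simp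
  ultimately show False using abs_ge_self[of R] \<delta> by linarith
qed

lemma certificate_impossible:
  assumes v: "v \<in> carrier_vec d" and vu: "unit_cvec v" and k0: "0 < k" and kd: "k \<le> d"
    and obj: "\<And>m. (\<Sum>i<d. (m i)^2) = 1 \<Longrightarrow> objective d k v m \<le> M" and M0: "0 \<le> M" and \<delta>: "0 < \<delta>"
    and h: "hermitian d H"
    and cert: "\<And>u y t. sparse_unit d k u \<Longrightarrow> 0 \<le> t \<Longrightarrow>
      \<delta> \<le> - Re (qform d H (\<lambda>i. u $ i)) + (Re (qform d H (\<lambda>i. v $ i)) - M * Re (\<Sum>a<d. H a a)) + t * Re (qform d H y)"
  shows False
proof -
  define \<psi> where "\<psi> = (\<lambda>i. v $ i)"
  define a where "a = Re (qform d H \<psi>)"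
  define s0 where "s0 = Re (\<Sum>a<d. H a a)"
  define u0 where "u0 = vec d (\<lambda>i. if i = 0 then 1 else (0::complex))"
  have u0: "sparse_unit d k u0" unfolding u0_def by (rule sparse_unit_first_basis_vector[OF k0 kd])
  have psd: "0 \<le> Re (qform d H y)" for y
    using certificate_psd[OF k0 kd _ cert] \<delta> by simp
  have bound: "Re (qform d H (\<lambda>i. u $ i)) \<le> a - M * s0 - \<delta>" if "sparse_unit d k u" for u
    using cert[OF that order_refl, of \<psi>] unfolding a_def s0_def \<psi>_def by simp
  obtain e t where "eigenbasis d H e t" using hermitian_eigenbasisE[OF h] .
  then interpret eigenbasis d H e t .
  have t0: "0 \<le> t j" if "j < d" for j using psd[of "e j"] qform_eigenvector[OF that] by simp
  define x where "x = matvec d H \<psi>"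
  define N where "N = sqnorm d x"
  have Nle: "N \<le> s0 * a"
    unfolding N_def x_def s0_def a_def trace_eq Re_complex_of_real
    by (rule sqnorm_matvec_le_trace_qform) (rule t0)
  have "cinner d x \<psi> = cnj (qform d H \<psi>)" unfolding x_def qform_def by (rule cinner_commute)
  hence x\<psi>: "cinner d x \<psi> = complex_of_real a"
    using hermitian_qform_real[OF h, of \<psi>] unfolding a_def by (metis complex_cnj_complex_of_real)
  have "0 \<le> s0" unfolding s0_def trace_eq Re_complex_of_real by (rule sum_nonneg) (use t0 in auto)
  hence "0 < a" using psd[of "\<lambda>i. u0 $ i"] bound[OF u0] M0 \<delta> by (smt (verit) mult_nonneg_nonneg)
  moreover have "a^2 \<le> N"
    using cinner_cauchy_schwarz[of d x \<psi>] unit_cvec_sqnorm[OF v vu] unfolding x\<psi> N_def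
    by (simp add: \<psi>_def)
  ultimately have Npos: "0 < N" by (smt (verit) zero_less_power)
  obtain u where u: "sparse_unit d k u" "(cmod (cinner d (\<lambda>i. u $ i) x))^2 = topk_sq d k (\<lambda>i. cmod (x i))"
    by (rule sparse_unit_attains_topk_sq[OF k0 kd])
  have "topk_sq d k (\<lambda>i. cmod (x i)) = (cmod (cinner d (\<lambda>i. u $ i) x))^2" using u(2) by simp
  also have "\<dots> \<le> Re (qform d H (\<lambda>i. u $ i)) * a"
    unfolding x_def a_def by (rule cinner_matvec_cauchy_schwarz) (rule t0)
  also have "\<dots> \<le> (a - M * s0 - \<delta>) * a" using bound[OF u(1)] \<open>0 < a\<close> by (simp add: mult_right_mono)
  finally have T: "topk_sq d k (\<lambda>i. cmod (x i)) \<le> a * (a - M * s0 - \<delta>)" by (simp add: mult.commute)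
  obtain m where m: "(\<Sum>i<d. (m i)^2) = 1"
    "((cmod (cinner d x \<psi>))^2 - topk_sq d k (\<lambda>i. cmod (x i))) / N \<le> objective d k v m"
    using objective_ge_complex[OF v Npos[unfolded N_def]] unfolding \<psi>_def N_def by blast
  hence "(a^2 - topk_sq d k (\<lambda>i. cmod (x i))) / N \<le> M" using obj[OF m(1)] unfolding x\<psi> by simp
  thus False using certificate_arithmetic[OF \<open>0 < a\<close> Npos M0 \<delta> Nle T] by simp
qed

section \<open>The minimax identity\<close>

lemma objective_cong:
  assumes "\<And>i. i < d \<Longrightarrow> f i = g i"
  shows "objective d k v f = objective d k v g"
proof -
  have "(\<Sum>i<d. f i * vdown v ! i) = (\<Sum>i<d. g i * vdown v ! i)" using assms by (intro sum.cong) auto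
  moreover have "topk_sq d k f = topk_sq d k g" using assms by (intro topk_sq_cong) auto
  ultimately show ?thesis unfolding objective_def by simp
qed

lemma sqnorm_real: "(\<And>i. i < d \<Longrightarrow> Im (x i) = 0) \<Longrightarrow> sqnorm d x = (\<Sum>i<d. (Re (x i))^2)"
  unfolding sqnorm_def by (intro sum.cong refl) (simp add: cmod_power2)

lemma objective_le_sum_vdown:
  assumes "(\<Sum>i<d. (m i)^2) = 1"
  shows "objective d k v m \<le> (\<Sum>i<d. \<bar>vdown v ! i\<bar>)^2"
proof -
  have "\<bar>\<Sum>i<d. m i * vdown v ! i\<bar> \<le> (\<Sum>i<d. \<bar>vdown v ! i\<bar>)"
  proof (rule order_trans[OF sum_abs], intro sum_mono)
    fix i assume "i \<in> {..<d}"
    hence "(m i)^2 \<le> 1" using assms member_le_sum[of i "{..<d}" "\<lambda>i. (m i)^2"] by simp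
    hence "\<bar>m i\<bar> \<le> 1" by (simp add: abs_square_le_1)
    thus "\<bar>m i * vdown v ! i\<bar> \<le> \<bar>vdown v ! i\<bar>" by (simp add: abs_mult mult_left_le_one_le)
  qed
  hence "(\<Sum>i<d. m i * vdown v ! i)^2 \<le> (\<Sum>i<d. \<bar>vdown v ! i\<bar>)^2"
    by (metis abs_ge_zero power2_abs power_mono)
  thus ?thesis unfolding objective_def using topk_sq_nonneg[of d k m] by linarith
qed

lemma real_unit_vectors_limit:
  assumes X: "\<And>j. sqnorm d (X j) = 1 \<and> (\<forall>i<d. Im (X j i) = 0)" and l: "\<forall>i<d. (\<lambda>j. X j i) \<longlonglongrightarrow> l i"
  shows "sqnorm d l = 1 \<and> (\<forall>i<d. Im (l i) = 0)"
proof (intro conjI allI impI)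
  show "sqnorm d l = 1" using LIMSEQ_unique[OF tendsto_sqnorm[OF l]] X by auto
  fix i assume "i < d"
  hence "(\<lambda>j. Im (X j i)) \<longlonglongrightarrow> Im (l i)" using l by (intro tendsto_Im) auto
  moreover have "(\<lambda>j. Im (X j i)) = (\<lambda>j. 0)" using X \<open>i < d\<close> by auto
  ultimately show "Im (l i) = 0" using LIMSEQ_unique tendsto_const by metis
qed

lemma objective_attains_max:
  assumes v: "v \<in> carrier_vec d" and d0: "0 < d"
  obtains m where "(\<Sum>i<d. (m i)^2) = 1"
    "\<And>m'. (\<Sum>i<d. (m' i)^2) = 1 \<Longrightarrow> objective d k v m' \<le> objective d k v m"
proof -
  text \<open>Real vectors are embedded as complex vectors with vanishing imaginary parts, so that the
    compactness lemma for complex coordinates applies.\<close>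
  define S where "S = {x. sqnorm d x = 1 \<and> (\<forall>i<d. Im (x i) = 0)}"
  define x0 where "x0 = (\<lambda>i::nat. if i = 0 then 1 else (0::complex))"
  have "sqnorm d x0 = (\<Sum>i<d. if i = 0 then 1 else 0)" unfolding sqnorm_def x0_def by (intro sum.cong) auto
  hence x0S: "x0 \<in> S" using d0 unfolding S_def x0_def by simp
  have "\<exists>x\<in>S. \<forall>y\<in>S. objective d k v (\<lambda>i. Re (y i)) \<le> objective d k v (\<lambda>i. Re (x i))"
  proof (rule coordinatewise_closed_attains_max[where I="{..<d}" and B=1 and C="(\<Sum>i<d. \<bar>vdown v ! i\<bar>)^2", OF _ x0S])
    show "cmod (x i) \<le> 1" if "x \<in> S" "i \<in> {..<d}" for x i
      using that norm_le_one_of_sqnorm unfolding S_def by auto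
  next
    fix X :: "nat \<Rightarrow> nat \<Rightarrow> complex" and l
    assume "\<And>j. X j \<in> S" and "\<forall>i\<in>{..<d}. (\<lambda>j. X j i) \<longlonglongrightarrow> l i"
    thus "\<exists>y\<in>S. \<forall>i\<in>{..<d}. y i = l i"
      using real_unit_vectors_limit[of d X l] unfolding S_def by auto
  next
    fix X :: "nat \<Rightarrow> nat \<Rightarrow> complex" and y assume "\<forall>i\<in>{..<d}. (\<lambda>j. X j i) \<longlonglongrightarrow> y i"
    hence "\<forall>i<d. (\<lambda>j. Re (X j i)) \<longlonglongrightarrow> Re (y i)" by (auto intro: tendsto_Re)
    thus "(\<lambda>j. objective d k v (\<lambda>i. Re (X j i))) \<longlonglongrightarrow> objective d k v (\<lambda>i. Re (y i))"
      unfolding objective_def by (intro tendsto_diff tendsto_power tendsto_sum tendsto_mult tendsto_const tendsto_topk_sq) auto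
  next
    fix x assume x: "x \<in> S"
    have "sqnorm d x = (\<Sum>i<d. (Re (x i))^2)" using x unfolding S_def by (intro sqnorm_real) auto
    thus "objective d k v (\<lambda>i. Re (x i)) \<le> (\<Sum>i<d. \<bar>vdown v ! i\<bar>)^2"
      using x unfolding S_def by (intro objective_le_sum_vdown) simp
  qed auto
  then obtain x where x: "x \<in> S" and xmax: "\<And>y. y \<in> S \<Longrightarrow> objective d k v (\<lambda>i. Re (y i)) \<le> objective d k v (\<lambda>i. Re (x i))"
    by blast
  show ?thesis
  proof (rule that)
    have "sqnorm d x = (\<Sum>i<d. (Re (x i))^2)" using x unfolding S_def by (intro sqnorm_real) auto
    thus "(\<Sum>i<d. (Re (x i))^2) = 1" using x unfolding S_def by simp
    fix m' :: "nat \<Rightarrow> real" assume "(\<Sum>i<d. (m' i)^2) = 1"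
    hence "(\<lambda>i. complex_of_real (m' i)) \<in> S" unfolding S_def sqnorm_def by simp
    thus "objective d k v m' \<le> objective d k v (\<lambda>i. Re (x i))" using xmax by fastforce
  qed
qed

lemma Ik_nonempty:
  assumes "0 < k" "k \<le> d"
  shows "Ik d k \<noteq> {}"
proof -
  have "sparse_mixture d k 1 (\<lambda>_. 1) (\<lambda>_. vec d (\<lambda>i. if i = 0 then 1 else 0))"
    by (rule sparse_mixture_single[OF sparse_unit_first_basis_vector[OF assms]])
  hence "mat d d (\<lambda>(a,b). mixture 1 (\<lambda>_. 1) (\<lambda>_. vec d (\<lambda>i. if i = 0 then 1 else 0)) a b) \<in> Ik d k"
    unfolding Ik_iff_sparse_mixture by blast
  thus ?thesis by blast
qed

lemma objective_le_Tk:
  assumes k0: "0 < k" and kd: "k \<le> d" and v: "v \<in> carrier_vec d" and vu: "unit_cvec v"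
    and m: "(\<Sum>i<d. (m i)^2) = 1"
  shows "objective d k v m \<le> Tk k v"
proof -
  have d0: "0 < d" and dv: "dim_vec v = d" using k0 kd v by auto
  show ?thesis unfolding Tk_def dv
  proof (rule cInf_greatest)
    show "(\<lambda>\<sigma>. trace_norm (outer v - \<sigma>) / 2) ` Ik d k \<noteq> {}" using Ik_nonempty[OF k0 kd] by blast
    fix r assume "r \<in> (\<lambda>\<sigma>. trace_norm (outer v - \<sigma>) / 2) ` Ik d k"
    thus "objective d k v m \<le> r" using objective_le_half_trace_norm[OF v vu d0 _ m] by blast
  qed
qed

lemma Tk_le_half_trace_norm:
  assumes v: "v \<in> carrier_vec d" and vu: "unit_cvec v" and d0: "0 < d" and \<sigma>: "\<sigma> \<in> Ik d k"
  shows "Tk k v \<le> trace_norm (outer v - \<sigma>) / 2"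
proof -
  define m0 where "m0 = (\<lambda>i::nat. if i = 0 then 1 else (0::real))"
  have "(\<Sum>i<d. (m0 i)^2) = (\<Sum>i<d. if i = 0 then 1 else 0)" unfolding m0_def by (intro sum.cong) auto
  hence "(\<Sum>i<d. (m0 i)^2) = 1" using d0 by simp
  hence "bdd_below ((\<lambda>\<sigma>. trace_norm (outer v - \<sigma>) / 2) ` Ik d k)"
    by (intro bdd_belowI[of _ "objective d k v m0"]) (auto intro: objective_le_half_trace_norm[OF v vu d0])
  moreover have "dim_vec v = d" using v by simp
  ultimately show ?thesis unfolding Tk_def by (intro cInf_lower) (use \<sigma> in auto)
qed

definition sparse_states :: "nat \<Rightarrow> nat \<Rightarrow> (nat \<Rightarrow> nat \<Rightarrow> complex) set" where
  "sparse_states d k = {mixture n p us | n p us. sparse_mixture d k n p us}"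

definition eigmax_bounded :: "nat \<Rightarrow> complex vec \<Rightarrow> real \<Rightarrow> (nat \<Rightarrow> nat \<Rightarrow> complex) set" where
  "eigmax_bounded d v M = {\<tau>. \<forall>x. sqnorm d x = 1 \<longrightarrow> Re (qform d (\<lambda>a b. pure_state v a b - \<tau> a b) x) \<le> M}"

lemma sum_lessThan_add_split:
  fixes f :: "nat \<Rightarrow> 'a::comm_monoid_add"
  shows "(\<Sum>i<n1 + n2. f i) = (\<Sum>i<n1. f i) + (\<Sum>i<n2. f (n1 + i))"
  by (induction n2) (simp_all add: add.assoc)

lemma convex_mats_sparse_states: "convex_mats (sparse_states d k)"
  unfolding convex_mats_def
proof (intro ballI allI impI)
  fix A B and s :: real assume "A \<in> sparse_states d k" "B \<in> sparse_states d k" and s: "0 \<le> s" "s \<le> 1"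
  then obtain n1 p1 us1 n2 p2 us2 where A: "sparse_mixture d k n1 p1 us1" "A = mixture n1 p1 us1"
    and B: "sparse_mixture d k n2 p2 us2" "B = mixture n2 p2 us2"
    unfolding sparse_states_def by blast
  interpret A: sparse_mixture d k n1 p1 us1 by (rule A(1))
  interpret B: sparse_mixture d k n2 p2 us2 by (rule B(1))
  define p where "p i = (if i < n1 then (1 - s) * p1 i else s * p2 (i - n1))" for i
  define us where "us i = (if i < n1 then us1 i else us2 (i - n1))" for i
  have "sparse_mixture d k (n1 + n2) p us"
  proof
    fix i assume i: "i < n1 + n2"
    show "0 \<le> p i" unfolding p_def using i s A.weights_nonneg B.weights_nonneg by auto
    show "sparse_unit d k (us i)" unfolding us_def using i A.sparse_units B.sparse_units by auto
  next
    show "(\<Sum>i<n1 + n2. p i) = 1"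
      unfolding sum_lessThan_add_split p_def using A.weights_sum B.weights_sum
      by (simp add: sum_distrib_left[symmetric])
  qed
  moreover have "convex_comb s A B = mixture (n1 + n2) p us"
    unfolding A(2) B(2) convex_comb_def mixture_def sum_lessThan_add_split p_def us_def
    by (intro ext) (simp add: sum_distrib_left algebra_simps)
  ultimately show "convex_comb s A B \<in> sparse_states d k" unfolding sparse_states_def by blast
qed

lemma convex_mats_eigmax_bounded: "convex_mats (eigmax_bounded d v M)"
  unfolding convex_mats_def
proof (intro ballI allI impI)
  fix A B and s :: real assume AB: "A \<in> eigmax_bounded d v M" "B \<in> eigmax_bounded d v M" and s: "0 \<le> s" "s \<le> 1"
  show "convex_comb s A B \<in> eigmax_bounded d v M"
    unfolding eigmax_bounded_def
  proof (intro CollectI allI impI)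
    fix x assume x: "sqnorm d x = 1"
    have "(\<lambda>a b. pure_state v a b - convex_comb s A B a b)
      = (\<lambda>a b. complex_of_real (1 - s) * (pure_state v a b - A a b) + complex_of_real s * (pure_state v a b - B a b))"
      unfolding convex_comb_def by (intro ext) (simp add: algebra_simps)
    hence "Re (qform d (\<lambda>a b. pure_state v a b - convex_comb s A B a b) x)
        = (1 - s) * Re (qform d (\<lambda>a b. pure_state v a b - A a b) x) + s * Re (qform d (\<lambda>a b. pure_state v a b - B a b) x)"
      by (simp add: qform_lincomb)
    also have "\<dots> \<le> (1 - s) * M + s * M"
      using AB s x unfolding eigmax_bounded_def by (intro add_mono mult_left_mono) auto
    finally show "Re (qform d (\<lambda>a b. pure_state v a b - convex_comb s A B a b) x) \<le> M"
      by (simp add: algebra_simps)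
  qed
qed

lemma convex_mats_differences:
  assumes "convex_mats K" "convex_mats L"
  shows "convex_mats {\<lambda>a b. \<sigma> a b - \<tau> a b | \<sigma> \<tau>. \<sigma> \<in> K \<and> \<tau> \<in> L}"
  unfolding convex_mats_def
proof (intro ballI allI impI)
  fix A B and s :: real assume "A \<in> {\<lambda>a b. \<sigma> a b - \<tau> a b | \<sigma> \<tau>. \<sigma> \<in> K \<and> \<tau> \<in> L}" "B \<in> {\<lambda>a b. \<sigma> a b - \<tau> a b | \<sigma> \<tau>. \<sigma> \<in> K \<and> \<tau> \<in> L}"
    and s: "0 \<le> s" "s \<le> 1"
  then obtain \<sigma>1 \<tau>1 \<sigma>2 \<tau>2 where "\<sigma>1 \<in> K" "\<tau>1 \<in> L" "\<sigma>2 \<in> K" "\<tau>2 \<in> L"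
    and A: "A = (\<lambda>a b. \<sigma>1 a b - \<tau>1 a b)" and B: "B = (\<lambda>a b. \<sigma>2 a b - \<tau>2 a b)" by blast
  hence "convex_comb s \<sigma>1 \<sigma>2 \<in> K" "convex_comb s \<tau>1 \<tau>2 \<in> L" using assms s unfolding convex_mats_def by auto
  moreover have "convex_comb s A B = (\<lambda>a b. convex_comb s \<sigma>1 \<sigma>2 a b - convex_comb s \<tau>1 \<tau>2 a b)"
    unfolding A B convex_comb_def by (intro ext) (simp add: algebra_simps)
  ultimately show "convex_comb s A B \<in> {\<lambda>a b. \<sigma> a b - \<tau> a b | \<sigma> \<tau>. \<sigma> \<in> K \<and> \<tau> \<in> L}" by blast
qed

lemma rank1_in_sparse_states:
  assumes "sparse_unit d k u"
  shows "(\<lambda>a b. u $ a * cnj (u $ b)) \<in> sparse_states d k"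
proof -
  have "mixture 1 (\<lambda>_. 1) (\<lambda>_. u) \<in> sparse_states d k"
    unfolding sparse_states_def using sparse_mixture_single[OF assms] by blast
  thus ?thesis by (simp only: mixture_single)
qed

lemma shifted_state_in_eigmax_bounded:
  assumes "0 \<le> t"
  shows "(\<lambda>a b. pure_state v a b - (complex_of_real M * (if a = b then 1 else 0) - complex_of_real t * (y a * cnj (y b))))
    \<in> eigmax_bounded d v M"
  unfolding eigmax_bounded_def
proof (intro CollectI allI impI)
  fix x assume x: "sqnorm d x = 1"
  have "qform d (\<lambda>a b. pure_state v a b - (pure_state v a b - (complex_of_real M * (if a = b then 1 else 0)
          - complex_of_real t * (y a * cnj (y b))))) x
      = qform d (\<lambda>a b. complex_of_real M * (if a = b then 1 else 0) + complex_of_real (- t) * (y a * cnj (y b))) x"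
    by (intro qform_mat_cong) simp
  also have "\<dots> = complex_of_real (M * sqnorm d x - t * (cmod (cinner d x y))^2)"
    unfolding qform_lincomb by (simp add: qform_scalar qform_rank1)
  finally show "Re (qform d (\<lambda>a b. pure_state v a b - (pure_state v a b - (complex_of_real M * (if a = b then 1 else 0)
          - complex_of_real t * (y a * cnj (y b))))) x) \<le> M"
    using x assms by simp
qed

lemma qform_le_frob_sqnorm:
  assumes "sqnorm d x = 1"
  shows "cmod (qform d E x) \<le> real d * real d * sqrt (frob_sqnorm d E)"
proof -
  have "cmod (qform d E x) \<le> (\<Sum>a<d. \<Sum>b<d. cmod (E a b))" by (rule qform_bound[OF assms])
  also have "\<dots> \<le> (\<Sum>a<d. \<Sum>b<d. sqrt (frob_sqnorm d E))"
    by (intro sum_mono real_le_rsqrt entry_sq_le_frob_sqnorm) auto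
  finally show ?thesis by simp
qed

lemma sparse_states_eigmax_bounded_gap:
  assumes v: "v \<in> carrier_vec d" and vu: "unit_cvec v" and d0: "0 < d"
    and \<sigma>: "\<sigma> \<in> sparse_states d k" and \<tau>: "\<tau> \<in> eigmax_bounded d v M" and M: "M \<le> Tk k v"
  shows "((Tk k v - M) / (real d * real d))^2 \<le> frob_sqnorm d (\<lambda>a b. \<sigma> a b - \<tau> a b)"
proof -
  obtain n p us where sm: "sparse_mixture d k n p us" and \<sigma>_eq: "\<sigma> = mixture n p us"
    using \<sigma> unfolding sparse_states_def by blast
  define \<sigma>' where "\<sigma>' = mat d d (\<lambda>(a,b). mixture n p us a b)"
  have "\<sigma>' \<in> Ik d k" unfolding \<sigma>'_def using sm Ik_iff_sparse_mixture by blast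
  hence "Tk k v \<le> trace_norm (outer v - \<sigma>') / 2" by (rule Tk_le_half_trace_norm[OF v vu d0])
  moreover obtain x0 where x0: "sqnorm d x0 = 1"
    "trace_norm (outer v - \<sigma>') / 2 = Re (qform d (\<lambda>a b. pure_state v a b - \<sigma> a b) x0)"
    using half_trace_norm_state_diff[OF v vu d0 sm \<sigma>'_def] unfolding \<sigma>_eq by blast
  moreover have "qform d (\<lambda>a b. pure_state v a b - \<sigma> a b) x0
      = qform d (\<lambda>a b. pure_state v a b - \<tau> a b) x0 - qform d (\<lambda>a b. \<sigma> a b - \<tau> a b) x0"
    unfolding qform_diff[symmetric] by (intro qform_mat_cong) simp
  moreover have "Re (qform d (\<lambda>a b. pure_state v a b - \<tau> a b) x0) \<le> M"
    using \<tau> x0(1) unfolding eigmax_bounded_def by auto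
  moreover have "- Re (qform d (\<lambda>a b. \<sigma> a b - \<tau> a b) x0) \<le> real d * real d * sqrt (frob_sqnorm d (\<lambda>a b. \<sigma> a b - \<tau> a b))"
    using qform_le_frob_sqnorm[OF x0(1), of "\<lambda>a b. \<sigma> a b - \<tau> a b"] abs_Re_le_cmod[of "qform d (\<lambda>a b. \<sigma> a b - \<tau> a b) x0"] by linarith
  ultimately have "(Tk k v - M) / (real d * real d) \<le> sqrt (frob_sqnorm d (\<lambda>a b. \<sigma> a b - \<tau> a b))"
    using d0 by (simp add: divide_le_eq mult.commute)
  hence "((Tk k v - M) / (real d * real d))^2 \<le> (sqrt (frob_sqnorm d (\<lambda>a b. \<sigma> a b - \<tau> a b)))^2"
    using M by (intro power_mono) auto
  thus ?thesis using frob_sqnorm_nonneg by simp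
qed

definition neg_herm_part :: "(nat \<Rightarrow> nat \<Rightarrow> complex) \<Rightarrow> nat \<Rightarrow> nat \<Rightarrow> complex" where
  "neg_herm_part Y = (\<lambda>a b. - (cnj (Y b a) + Y a b) / 2)"

text \<open>\<open>neg_herm_part Y\<close> is the Hermitian \<open>H\<close> with \<open>Re \<langle>Y, u u\<^sup>\<dagger>\<rangle> = - \<langle>u, H u\<rangle>\<close>.\<close>

lemma hermitian_neg_herm_part: "hermitian d (neg_herm_part Y)"
  unfolding hermitian_def neg_herm_part_def by (simp add: add.commute)

lemma frob_inner_rank1: "Re (frob_inner d Y (\<lambda>a b. u a * cnj (u b))) = - Re (qform d (neg_herm_part Y) u)"
proof -
  define m where "m = frob_inner d Y (\<lambda>a b. u a * cnj (u b))"
  have e1: "(\<Sum>a<d. \<Sum>b<d. cnj (u a) * cnj (Y b a) * u b) = m"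
    unfolding m_def frob_inner_def by (subst sum.swap) (intro sum.cong refl, simp add: algebra_simps)
  have e2: "(\<Sum>a<d. \<Sum>b<d. cnj (u a) * Y a b * u b) = cnj m"
    unfolding m_def frob_inner_def cnj_sum by (intro sum.cong refl) (simp add: algebra_simps)
  have "qform d (neg_herm_part Y) u
      = (-1/2) * (\<Sum>a<d. \<Sum>b<d. cnj (u a) * cnj (Y b a) * u b) + (-1/2) * (\<Sum>a<d. \<Sum>b<d. cnj (u a) * Y a b * u b)"
    unfolding qform_expand neg_herm_part_def sum_distrib_left sum.distrib[symmetric]
    by (intro sum.cong refl) (simp add: field_simps)
  thus ?thesis unfolding e1 e2 m_def by simp
qed

lemma frob_inner_identity: "Re (frob_inner d Y (\<lambda>a b. if a = b then 1 else 0)) = - Re (\<Sum>a<d. neg_herm_part Y a a)"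
proof -
  have "frob_inner d Y (\<lambda>a b. if a = b then 1 else 0) = (\<Sum>a<d. cnj (Y a a))"
    unfolding frob_inner_def by (intro sum.cong refl) (simp add: if_distrib sum.delta cong: if_cong)
  thus ?thesis unfolding neg_herm_part_def by (simp add: sum_negf)
qed

lemma frob_inner_certificate:
  "Re (frob_inner d Y (\<lambda>a b. u a * cnj (u b) - (pure_state v a b - (complex_of_real M * (if a = b then 1 else 0)
      - complex_of_real t * (y a * cnj (y b))))))
   = - Re (qform d (neg_herm_part Y) u) + (Re (qform d (neg_herm_part Y) (\<lambda>a. v $ a))
     - M * Re (\<Sum>a<d. neg_herm_part Y a a)) + t * Re (qform d (neg_herm_part Y) y)"
proof -
  have "frob_inner d Y (\<lambda>a b. u a * cnj (u b) - (pure_state v a b - (complex_of_real M * (if a = b then 1 else 0)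
      - complex_of_real t * (y a * cnj (y b)))))
    = frob_inner d Y (\<lambda>a b. u a * cnj (u b)) - frob_inner d Y (pure_state v)
      + complex_of_real M * frob_inner d Y (\<lambda>a b. if a = b then 1 else 0)
      - complex_of_real t * frob_inner d Y (\<lambda>a b. y a * cnj (y b))"
    unfolding frob_inner_def by (simp add: sum.distrib sum_subtractf sum_distrib_left algebra_simps)
  thus ?thesis
    unfolding pure_state_def by (simp add: frob_inner_rank1 frob_inner_identity frob_inner_rank1[of d Y "\<lambda>a. v $ a", simplified])
qed

lemma objective_vdown_nonneg:
  assumes "v \<in> carrier_vec d" "unit_cvec v"
  shows "0 \<le> objective d k v (\<lambda>i. vdown v ! i)"
proof -
  have "objective d k v (\<lambda>i. vdown v ! i) = 1 - topk_sq d k (\<lambda>i. vdown v ! i)"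
    unfolding objective_def using vdown_sum_squares[OF assms] by (simp add: power2_eq_square)
  thus ?thesis using topk_sq_le_sum[of d k "\<lambda>i. vdown v ! i"] vdown_sum_squares[OF assms] by simp
qed

lemma Tk_le_of_objective_le:
  assumes k0: "0 < k" and kd: "k \<le> d" and v: "v \<in> carrier_vec d" and vu: "unit_cvec v"
    and obj: "\<And>m. (\<Sum>i<d. (m i)^2) = 1 \<Longrightarrow> objective d k v m \<le> M"
  shows "Tk k v \<le> M"
proof (rule ccontr)
  assume "\<not> Tk k v \<le> M"
  have d0: "0 < d" using k0 kd by simp
  have M0: "0 \<le> M" using obj[OF vdown_sum_squares[OF v vu]] objective_vdown_nonneg[where k=k, OF v vu] by simp
  define \<delta> where "\<delta> = ((Tk k v - M) / (real d * real d))^2"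
  have \<delta>: "0 < \<delta>" unfolding \<delta>_def using \<open>\<not> Tk k v \<le> M\<close> d0 by simp
  define C where "C = {\<lambda>a b. \<sigma> a b - \<tau> a b | \<sigma> \<tau>. \<sigma> \<in> sparse_states d k \<and> \<tau> \<in> eigmax_bounded d v M}"
  have "\<delta> \<le> frob_sqnorm d W" if W: "W \<in> C" for W
  proof -
    obtain \<sigma> \<tau> where "\<sigma> \<in> sparse_states d k" "\<tau> \<in> eigmax_bounded d v M" and W: "W = (\<lambda>a b. \<sigma> a b - \<tau> a b)"
      using W unfolding C_def by blast
    thus ?thesis unfolding \<delta>_def using sparse_states_eigmax_bounded_gap[OF v vu d0] \<open>\<not> Tk k v \<le> M\<close> by simp
  qed
  moreover have "C \<noteq> {}"
    using rank1_in_sparse_states[OF sparse_unit_first_basis_vector[OF k0 kd]]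
      shifted_state_in_eigmax_bounded[of 0 v M] unfolding C_def by blast
  moreover have "convex_mats C"
    unfolding C_def by (intro convex_mats_differences convex_mats_sparse_states convex_mats_eigmax_bounded)
  ultimately obtain Y where Y: "\<forall>W\<in>C. \<delta> \<le> Re (frob_inner d Y W)"
    using convex_mats_separation by blast
  have "\<delta> \<le> - Re (qform d (neg_herm_part Y) (\<lambda>i. u $ i)) + (Re (qform d (neg_herm_part Y) (\<lambda>i. v $ i))
      - M * Re (\<Sum>a<d. neg_herm_part Y a a)) + t * Re (qform d (neg_herm_part Y) y)"
    if "sparse_unit d k u" "0 \<le> t" for u y t
  proof -
    define \<sigma> where "\<sigma> = (\<lambda>a b. u $ a * cnj (u $ b))"
    define \<tau> where "\<tau> = (\<lambda>a b. pure_state v a b - (complex_of_real M * (if a = b then 1 else 0)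
        - complex_of_real t * (y a * cnj (y b))))"
    have "\<sigma> \<in> sparse_states d k" "\<tau> \<in> eigmax_bounded d v M"
      unfolding \<sigma>_def \<tau>_def using rank1_in_sparse_states[OF that(1)] shifted_state_in_eigmax_bounded[OF that(2)]
      by auto
    hence "(\<lambda>a b. \<sigma> a b - \<tau> a b) \<in> C" unfolding C_def by blast
    hence "\<delta> \<le> Re (frob_inner d Y (\<lambda>a b. \<sigma> a b - \<tau> a b))" using Y by blast
    thus ?thesis unfolding \<sigma>_def \<tau>_def frob_inner_certificate .
  qed
  thus False using certificate_impossible[OF v vu k0 kd obj M0 \<delta> hermitian_neg_herm_part] by blast
qed

lemma objective_eq_topk_norm:
  assumes "m \<in> carrier_vec d" "k \<le> d"
  shows "(rinner_list m (vdown v))^2 - (topk_norm k m)^2 = objective d k v (\<lambda>i. m $ i)"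
  unfolding rinner_list_def objective_def topk_norm_sq[OF assms] using assms by simp

theorem mainTheorem4:
  fixes k d :: nat and v :: "complex vec"
  assumes "0 < k" and "k \<le> d"
    and "v \<in> carrier_vec d" and "unit_cvec v"
  shows "(\<exists>m \<in> carrier_vec d. (\<Sum>i<d. (m $ i)\<^sup>2) = 1 \<and>
            Tk k v = (rinner_list m (vdown v))\<^sup>2 - (topk_norm k m)\<^sup>2)
       \<and> (\<forall>m \<in> carrier_vec d. (\<Sum>i<d. (m $ i)\<^sup>2) = 1 \<longrightarrow>
            (rinner_list m (vdown v))\<^sup>2 - (topk_norm k m)\<^sup>2 \<le> Tk k v)"
proof -
  have "0 < d" using assms(1,2) by simp
  then obtain m0 where m0: "(\<Sum>i<d. (m0 i)^2) = 1"
    and max: "\<And>m. (\<Sum>i<d. (m i)^2) = 1 \<Longrightarrow> objective d k v m \<le> objective d k v m0"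
    using objective_attains_max[OF assms(3)] by blast
  have Tk: "Tk k v = objective d k v m0"
    using objective_le_Tk[OF assms m0] Tk_le_of_objective_le[OF assms max] by simp
  have "objective d k v m0 = (rinner_list (vec d m0) (vdown v))^2 - (topk_norm k (vec d m0))^2"
    using objective_eq_topk_norm[of "vec d m0" d k v] assms(2) objective_cong[of d "\<lambda>i. vec d m0 $ i" m0] by simp
  moreover have "(\<Sum>i<d. (vec d m0 $ i)^2) = 1" using m0 by simp
  moreover have "(rinner_list m (vdown v))^2 - (topk_norm k m)^2 \<le> objective d k v m0"
    if "m \<in> carrier_vec d" "(\<Sum>i<d. (m $ i)^2) = 1" for m
    unfolding objective_eq_topk_norm[OF that(1) assms(2)] using max that(2) by simp
  ultimately show ?thesis unfolding Tk by (meson vec_carrier)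
qed

end
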